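(* Let $\mathbb{K}$ be a positive commutative monoid that has the transportation property. For every hypergraph $H$, $H$ is acyclic if and only if $H$ has the local-to-global consistency property for $\mathbb{K}$-relations.
   Context: A commutative monoid $\mathbb{K}=(K,+,0)$ is positive if $p+q=0$ implies $p=q=0$; monoids have at least two elements. $\mathbb{K}$ has the transportation property if for all positive integers $m,n$ and $b\in K^m$, $c\in K^n$ with $b_1+\dots+b_m=c_1+\dots+c_n$ there is $(d_{ij})\in K^{m\times n}$ with row sums $b_i$ and column sums $c_j$. Attributes have domains (arbitrary sets, chosen as needed); for a finite attribute set $X$, an $X$-tuple assigns each attribute a value in its domain; $t[Y]$ is restriction. A $\mathbb{K}$-relation over $X$ is a finitely supported function $R$ from $X$-tuples to $K$; marginals $R[Y](t)=\sum_{r:R(r)\ne0,r[Y]=t}R(r)$. A hypergraph with hyperedges $X_1,\dots,X_m$ (vertices as attributes) has the local-to-global consistency property for $\mathbb{K}$-relations if every collection $R_1(X_1),\dots,R_m(X_m)$ that is pairwise consistent (for all $i,j$ some $W$ over $X_i\cup X_j$ has $W[X_i]=R_i,W[X_j]=R_j$) is globally consistent (some $W$ over $\bigcup_i X_i$ has $W[X_i]=R_i$ for all $i$). A hypergraph is acyclic (Beeri–Fagin–Maier–Yannakakis) iff it has a join tree: a tree on its hyperedges such that for each vertex the hyperedges containing it form a connected subtree. *)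

theory Defs
  imports Main
begin

definition positive_monoid :: "'k::comm_monoid_add itself \<Rightarrow> bool" where
  "positive_monoid _ \<longleftrightarrow> (\<forall>p q :: 'k. p + q = 0 \<longrightarrow> p = 0 \<and> q = 0)"

definition nontrivial_monoid :: "'k::comm_monoid_add itself \<Rightarrow> bool" where
  "nontrivial_monoid _ \<longleftrightarrow> (\<exists>x y :: 'k. x \<noteq> y)"

definition transportation_property :: "'k::comm_monoid_add itself \<Rightarrow> bool" where
  "transportation_property _ \<longleftrightarrow>
     (\<forall>m n. 0 < m \<longrightarrow> 0 < n \<longrightarrow>
        (\<forall>(b :: nat \<Rightarrow> 'k) (c :: nat \<Rightarrow> 'k).
           (\<Sum>i<m. b i) = (\<Sum>j<n. c j) \<longrightarrow>
           (\<exists>d :: nat \<Rightarrow> nat \<Rightarrow> 'k.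
              (\<forall>i<m. (\<Sum>j<n. d i j) = b i) \<and> (\<forall>j<n. (\<Sum>i<m. d i j) = c j))))"

text \<open>Attributes have type 'a, all values live in one universe type 'v.
  An X-tuple is a partial map with domain exactly X; restriction is map restriction.\<close>

definition is_krel :: "'a set \<Rightarrow> (('a \<rightharpoonup> 'v) \<Rightarrow> 'k::comm_monoid_add) \<Rightarrow> bool" where
  "is_krel X R \<longleftrightarrow> finite {t. R t \<noteq> 0} \<and> (\<forall>t. R t \<noteq> 0 \<longrightarrow> dom t = X)"

definition marginal :: "(('a \<rightharpoonup> 'v) \<Rightarrow> 'k::comm_monoid_add) \<Rightarrow> 'a set \<Rightarrow> ('a \<rightharpoonup> 'v) \<Rightarrow> 'k" where
  "marginal R Y t = (\<Sum>r\<in>{r. R r \<noteq> 0 \<and> r |` Y = t}. R r)"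

definition pairwise_consistent ::
  "'a set set \<Rightarrow> ('a set \<Rightarrow> ('a \<rightharpoonup> 'v) \<Rightarrow> 'k::comm_monoid_add) \<Rightarrow> bool" where
  "pairwise_consistent E R \<longleftrightarrow>
     (\<forall>X\<in>E. \<forall>Y\<in>E. \<exists>W. is_krel (X \<union> Y) W \<and> marginal W X = R X \<and> marginal W Y = R Y)"

definition globally_consistent ::
  "'a set set \<Rightarrow> ('a set \<Rightarrow> ('a \<rightharpoonup> 'v) \<Rightarrow> 'k::comm_monoid_add) \<Rightarrow> bool" where
  "globally_consistent E R \<longleftrightarrow> (\<exists>W. is_krel (\<Union>E) W \<and> (\<forall>X\<in>E. marginal W X = R X))"

definition local_to_global ::
  "'k::comm_monoid_add itself \<Rightarrow> 'v itself \<Rightarrow> 'a set set \<Rightarrow> bool" where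
  "local_to_global _ _ E \<longleftrightarrow>
     (\<forall>R :: 'a set \<Rightarrow> ('a \<rightharpoonup> 'v) \<Rightarrow> 'k.
        (\<forall>X\<in>E. is_krel X (R X)) \<longrightarrow> pairwise_consistent E R \<longrightarrow> globally_consistent E R)"

definition hypergraph :: "'a set set \<Rightarrow> bool" where
  "hypergraph E \<longleftrightarrow> finite E \<and> (\<forall>X\<in>E. finite X)"

definition adj :: "'b set set \<Rightarrow> ('b \<times> 'b) set" where
  "adj T = {(x, y). {x, y} \<in> T}"

text \<open>A tree on vertex set V with edge set T (undirected edges as 2-element sets):
  connected and every edge is a bridge (no cycles).\<close>

definition is_tree :: "'b set \<Rightarrow> 'b set set \<Rightarrow> bool" where
  "is_tree V T \<longleftrightarrow>
     T \<subseteq> {{x, y} | x y. x \<in> V \<and> y \<in> V \<and> x \<noteq> y} \<and>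
     (\<forall>x\<in>V. \<forall>y\<in>V. (x, y) \<in> (adj T)\<^sup>*) \<and>
     (\<forall>x y. {x, y} \<in> T \<longrightarrow> (x, y) \<notin> (adj (T - {{x, y}}))\<^sup>*)"

definition join_tree :: "'a set set \<Rightarrow> 'a set set set \<Rightarrow> bool" where
  "join_tree E T \<longleftrightarrow> is_tree E T \<and>
     (\<forall>v. let S = {X\<in>E. v \<in> X} in
        \<forall>X\<in>S. \<forall>Y\<in>S. (X, Y) \<in> (adj {e\<in>T. e \<subseteq> S})\<^sup>*)"

definition acyclic_hypergraph :: "'a set set \<Rightarrow> bool" where
  "acyclic_hypergraph E \<longleftrightarrow> (\<exists>T. join_tree E T)"

end

(*
  Acyclic implies local-to-global: two K-relations whose marginals agree on their common
  attributes can be joined, because on each fibre over a common sub-tuple the transportation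
  property yields a matrix with the prescribed row and column sums (positivity handles empty
  fibres). Removing a leaf X of a join tree, attached to Y, the remaining edges meet X only
  inside Y, so a global witness for them can be glued with a witness for {X, Y}.

  Local-to-global implies acyclic: if E has no join tree, GYO reduction gets stuck at a family
  M of traces of edges on a vertex set V, pairwise incomparable, in which every vertex lies in
  two members. Over the values {0, 1, 2} take, for each Y in M, the solutions of
  sum of c(Y,v) x(v) over v in Y = [Y = Y0] (mod 3), with c(Y,v) in {1, 2} chosen so that the
  coefficients of every vertex add up to 0 mod 3. Weighted suitably, all proper marginals of
  these relations are uniform, so they are pairwise consistent; but a tuple in the support of
  a global witness would solve all equations, and adding them up gives 0 = 1 (mod 3).
*)

theory Submission
  imports Defs
begin

section \<open>Marginals of K-relations\<close>

lemma restrict_map_dom_self: "dom r = A \<Longrightarrow> r |` A = r"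
  by (rule ext) (auto simp: restrict_map_def)

lemma is_krelD:
  assumes "is_krel A Q"
  shows "finite {t. Q t \<noteq> 0}" and "Q t \<noteq> 0 \<Longrightarrow> dom t = A"
  using assms by (auto simp: is_krel_def)

lemma marginal_eq_sum_superset:
  assumes "finite S" and "{r. Q r \<noteq> 0} \<subseteq> S"
  shows "marginal Q B t = (\<Sum>r\<in>{r\<in>S. r |` B = t}. Q r)"
  unfolding marginal_def by (rule sum.mono_neutral_left) (use assms in auto)

lemma marginal_nonzeroD:
  assumes "marginal Q B t \<noteq> 0"
  obtains r where "Q r \<noteq> 0" and "r |` B = t"
proof -
  have "{r. Q r \<noteq> 0 \<and> r |` B = t} \<noteq> {}"
    using assms unfolding marginal_def by force
  then show ?thesis using that by blast
qed

lemma support_marginal_subset: "{t. marginal Q B t \<noteq> 0} \<subseteq> (\<lambda>r. r |` B) ` {r. Q r \<noteq> 0}"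
proof
  fix t assume "t \<in> {t. marginal Q B t \<noteq> 0}"
  then have "marginal Q B t \<noteq> 0" by simp
  then obtain r where "Q r \<noteq> 0" "r |` B = t" by (rule marginal_nonzeroD)
  then show "t \<in> (\<lambda>r. r |` B) ` {r. Q r \<noteq> 0}" by blast
qed

lemma is_krel_marginal:
  assumes "is_krel A Q" and "B \<subseteq> A"
  shows "is_krel B (marginal Q B)"
proof -
  have "finite {t. marginal Q B t \<noteq> 0}"
    using is_krelD(1)[OF assms(1)] support_marginal_subset by (rule finite_surj)
  moreover have "dom t = B" if nz: "marginal Q B t \<noteq> 0" for t
  proof -
    obtain r where "Q r \<noteq> 0" and rt: "r |` B = t" using nz by (rule marginal_nonzeroD)
    from \<open>Q r \<noteq> 0\<close> have "dom r = A" by (rule is_krelD(2)[OF assms(1)])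
    then have "dom t = A \<inter> B" using rt by (metis dom_restrict)
    then show ?thesis using assms(2) by blast
  qed
  ultimately show ?thesis by (simp add: is_krel_def)
qed

lemma marginal_full:
  assumes "is_krel A Q"
  shows "marginal Q A = Q"
proof
  fix t
  have "{r. Q r \<noteq> 0 \<and> r |` A = t} = (if Q t \<noteq> 0 then {t} else {})"
    using assms by (auto simp: is_krel_def restrict_map_dom_self)
  then show "marginal Q A t = Q t" by (simp add: marginal_def)
qed

lemma marginal_marginal:
  assumes "is_krel A Q" and "C \<subseteq> B"
  shows "marginal (marginal Q B) C = marginal Q C"
proof
  fix t
  let ?S = "{r. Q r \<noteq> 0}"
  let ?St = "{r\<in>?S. r |` C = t}"
  have fin: "finite ?S" using is_krelD(1)[OF assms(1)] .
  have BC: "B \<inter> C = C" using assms(2) by blast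
  have restrict_C_eq: "r |` C = r' |` C" if "r |` B = r' |` B" for r r' :: "'a \<rightharpoonup> 'b"
  proof -
    have "r |` C = r |` B |` C" by (simp add: BC)
    also have "\<dots> = r' |` C" using that by (simp add: BC)
    finally show ?thesis .
  qed
  have "marginal (marginal Q B) C t = (\<Sum>y\<in>{y\<in>(\<lambda>r. r |` B) ` ?S. y |` C = t}. marginal Q B y)"
    using fin support_marginal_subset by (intro marginal_eq_sum_superset) simp_all
  also have "\<dots> = (\<Sum>y\<in>(\<lambda>r. r |` B) ` ?St. \<Sum>r\<in>{r\<in>?St. r |` B = y}. Q r)"
  proof (rule sum.cong)
    show "{y\<in>(\<lambda>r. r |` B) ` ?S. y |` C = t} = (\<lambda>r. r |` B) ` ?St"
    proof (intro subset_antisym subsetI)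
      fix y assume "y \<in> {y\<in>(\<lambda>r. r |` B) ` ?S. y |` C = t}"
      then obtain r where r: "r \<in> ?S" "y = r |` B" and "y |` C = t" by blast
      then have "r \<in> ?St" by (simp add: BC)
      with r(2) show "y \<in> (\<lambda>r. r |` B) ` ?St" by blast
    next
      fix y assume "y \<in> (\<lambda>r. r |` B) ` ?St"
      then obtain r where "r \<in> ?St" "y = r |` B" by blast
      then show "y \<in> {y\<in>(\<lambda>r. r |` B) ` ?S. y |` C = t}" by (simp add: BC)
    qed
    fix y assume "y \<in> (\<lambda>r. r |` B) ` ?St"
    then obtain r0 where r0: "r0 \<in> ?St" "y = r0 |` B" by blast
    have "r |` C = t" if "r |` B = y" for r
      using restrict_C_eq[of r r0] that r0 by simp
    then have "{r\<in>?St. r |` B = y} = {r\<in>?S. r |` B = y}" by blast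
    then show "marginal Q B y = (\<Sum>r\<in>{r\<in>?St. r |` B = y}. Q r)"
      by (simp add: marginal_eq_sum_superset[OF fin])
  qed
  also have "\<dots> = (\<Sum>r\<in>?St. Q r)"
    by (rule sum.image_gen[symmetric]) (use fin in simp)
  also have "\<dots> = marginal Q C t"
    by (simp add: marginal_def)
  finally show "marginal (marginal Q B) C t = marginal Q C t" .
qed

lemma positive_sum_eq_0_iff:
  assumes "positive_monoid TYPE('k::comm_monoid_add)" and "finite S"
  shows "sum (f :: _ \<Rightarrow> 'k) S = 0 \<longleftrightarrow> (\<forall>x\<in>S. f x = 0)"
  using assms(2)
proof induction
  case (insert x F)
  have "f x + sum f F = 0 \<longleftrightarrow> f x = 0 \<and> sum f F = 0"
    using assms(1) unfolding positive_monoid_def by (metis add.right_neutral)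
  then show ?case using insert by simp
qed simp

lemma marginal_at_restrict_nonzero:
  assumes "positive_monoid TYPE('k::comm_monoid_add)" and "is_krel A (W :: _ \<Rightarrow> 'k)"
    and "W r \<noteq> 0"
  shows "marginal W B (r |` B) \<noteq> 0"
proof -
  have "finite {s. W s \<noteq> 0 \<and> s |` B = r |` B}"
    using is_krelD(1)[OF assms(2)] by (rule rev_finite_subset) blast
  then show ?thesis
    unfolding marginal_def using positive_sum_eq_0_iff[OF assms(1)] assms(3) by blast
qed

lemma bij_betw_lessThan_card:
  assumes "finite S"
  obtains h where "bij_betw h {..<card S} S"
  using ex_bij_betw_nat_finite[OF assms] by (auto simp: atLeast0LessThan)

lemma transportation_finite_sets:
  assumes pos: "positive_monoid TYPE('k::comm_monoid_add)"
    and tp: "transportation_property TYPE('k)"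
    and "finite R" and "finite C"
    and eq: "sum (f :: _ \<Rightarrow> 'k) R = sum g C"
  shows "\<exists>d. (\<forall>x\<in>R. (\<Sum>y\<in>C. d x y) = f x) \<and> (\<forall>y\<in>C. (\<Sum>x\<in>R. d x y) = g y)"
proof (cases "R = {} \<or> C = {}")
  case True
  then have "sum f R = 0" "sum g C = 0" using eq by auto
  then have "\<forall>x\<in>R. f x = 0" "\<forall>y\<in>C. g y = 0"
    using positive_sum_eq_0_iff[OF pos \<open>finite R\<close>, of f]
      positive_sum_eq_0_iff[OF pos \<open>finite C\<close>, of g] by simp_all
  then show ?thesis by (intro exI[of _ "\<lambda>x y. 0"]) simp
next
  case False
  obtain hR where hR: "bij_betw hR {..<card R} R" using bij_betw_lessThan_card[OF \<open>finite R\<close>] .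
  obtain hC where hC: "bij_betw hC {..<card C} C" using bij_betw_lessThan_card[OF \<open>finite C\<close>] .
  have "(\<Sum>i<card R. f (hR i)) = (\<Sum>j<card C. g (hC j))"
    using eq by (simp add: sum.reindex_bij_betw[OF hR] sum.reindex_bij_betw[OF hC])
  moreover have "0 < card R" "0 < card C" using False assms(3,4) by auto
  ultimately obtain dn where
    rows: "\<forall>i<card R. (\<Sum>j<card C. dn i j) = f (hR i)" and
    cols: "\<forall>j<card C. (\<Sum>i<card R. dn i j) = g (hC j)"
    using tp[unfolded transportation_property_def, rule_format, of "card R" "card C"] by blast
  let ?iR = "inv_into {..<card R} hR" and ?iC = "inv_into {..<card C} hC"
  have iR: "bij_betw ?iR R {..<card R}" and iC: "bij_betw ?iC C {..<card C}"
    using hR hC by (simp_all add: bij_betw_inv_into)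
  show ?thesis
  proof (intro exI[of _ "\<lambda>x y. dn (?iR x) (?iC y)"] conjI ballI)
    fix x assume "x \<in> R"
    have "(\<Sum>y\<in>C. dn (?iR x) (?iC y)) = (\<Sum>j<card C. dn (?iR x) j)"
      by (rule sum.reindex_bij_betw[OF iC])
    also have "\<dots> = f (hR (?iR x))"
      using rows bij_betw_apply[OF iR \<open>x \<in> R\<close>] by simp
    also have "\<dots> = f x"
      using bij_betw_inv_into_right[OF hR \<open>x \<in> R\<close>] by simp
    finally show "(\<Sum>y\<in>C. dn (?iR x) (?iC y)) = f x" .
  next
    fix y assume "y \<in> C"
    have "(\<Sum>x\<in>R. dn (?iR x) (?iC y)) = (\<Sum>i<card R. dn i (?iC y))"
      by (rule sum.reindex_bij_betw[OF iR, of "\<lambda>i. dn i (?iC y)"])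
    also have "\<dots> = g (hC (?iC y))"
      using cols bij_betw_apply[OF iC \<open>y \<in> C\<close>] by simp
    also have "\<dots> = g y"
      using bij_betw_inv_into_right[OF hC \<open>y \<in> C\<close>] by simp
    finally show "(\<Sum>x\<in>R. dn (?iR x) (?iC y)) = g y" .
  qed
qed

section \<open>Joining two K-relations\<close>

lemma map_add_restrict_Un: "dom r = A \<union> B \<Longrightarrow> (r |` A) ++ (r |` B) = r"
  by (rule ext) (auto simp: map_add_def restrict_map_def split: option.splits)

lemma
  assumes "dom s = A" and "dom s' = B" and "s |` (A \<inter> B) = s' |` (A \<inter> B)"
  shows map_add_restrict_left: "(s ++ s') |` A = s"
    and map_add_restrict_right: "(s ++ s') |` B = s'"
proof -
  have agree: "s x = s' x" if "x \<in> A" "x \<in> B" for x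
    using fun_cong[OF assms(3), of x] that by simp
  show "(s ++ s') |` A = s"
  proof
    fix x show "((s ++ s') |` A) x = s x"
      using assms(1,2) agree[of x]
      by (cases "x \<in> A"; cases "x \<in> B") (auto simp: map_add_def split: option.splits)
  qed
  show "(s ++ s') |` B = s'"
    by (rule ext) (use assms(2) in \<open>auto simp: map_add_def restrict_map_def split: option.splits\<close>)
qed

definition krel_join ::
  "'a set \<Rightarrow> 'a set \<Rightarrow> (('a \<rightharpoonup> 'v) \<Rightarrow> 'k::comm_monoid_add) \<Rightarrow> (('a \<rightharpoonup> 'v) \<Rightarrow> 'k) \<Rightarrow>
    (('a \<rightharpoonup> 'v) \<Rightarrow> ('a \<rightharpoonup> 'v) \<Rightarrow> 'k) \<Rightarrow> ('a \<rightharpoonup> 'v) \<Rightarrow> 'k" where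
  "krel_join A B Q Q' D r =
     (if dom r = A \<union> B \<and> Q (r |` A) \<noteq> 0 \<and> Q' (r |` B) \<noteq> 0 then D (r |` A) (r |` B) else 0)"

lemma krel_join_commute: "krel_join A B Q Q' D = krel_join B A Q' Q (\<lambda>s' s. D s s')"
  by (rule ext) (simp add: krel_join_def Un_commute conj_ac)

lemma finite_join_support:
  assumes "is_krel A Q" and "is_krel B Q'"
  shows "finite {r. dom r = A \<union> B \<and> Q (r |` A) \<noteq> 0 \<and> Q' (r |` B) \<noteq> 0}"
proof (rule finite_subset)
  show "{r. dom r = A \<union> B \<and> Q (r |` A) \<noteq> 0 \<and> Q' (r |` B) \<noteq> 0}
      \<subseteq> (\<lambda>(s, s'). s ++ s') ` ({s. Q s \<noteq> 0} \<times> {s'. Q' s' \<noteq> 0})"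
  proof
    fix r assume r: "r \<in> {r. dom r = A \<union> B \<and> Q (r |` A) \<noteq> 0 \<and> Q' (r |` B) \<noteq> 0}"
    then have "r = (\<lambda>(s, s'). s ++ s') (r |` A, r |` B)" by (simp add: map_add_restrict_Un)
    with r show "r \<in> (\<lambda>(s, s'). s ++ s') ` ({s. Q s \<noteq> 0} \<times> {s'. Q' s' \<noteq> 0})" by blast
  qed
  show "finite ((\<lambda>(s, s'). s ++ s') ` ({s. Q s \<noteq> 0} \<times> {s'. Q' s' \<noteq> 0}))"
    using is_krelD(1)[OF assms(1)] is_krelD(1)[OF assms(2)] by simp
qed

lemma is_krel_join:
  assumes "is_krel A Q" and "is_krel B Q'"
  shows "is_krel (A \<union> B) (krel_join A B Q Q' D)"
  using finite_subset[OF _ finite_join_support[OF assms]]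
  unfolding is_krel_def krel_join_def by (auto split: if_splits)

lemma bij_betw_join_fibre:
  assumes Q': "is_krel B Q'" and s: "dom s = A" "Q s \<noteq> 0"
  shows "bij_betw (\<lambda>s'. s ++ s') {s'. Q' s' \<noteq> 0 \<and> s' |` (A \<inter> B) = s |` (A \<inter> B)}
    {r. dom r = A \<union> B \<and> Q (r |` A) \<noteq> 0 \<and> Q' (r |` B) \<noteq> 0 \<and> r |` A = s}"
proof (rule bij_betw_byWitness[where f' = "\<lambda>r. r |` B"])
  let ?cols = "{s'. Q' s' \<noteq> 0 \<and> s' |` (A \<inter> B) = s |` (A \<inter> B)}"
  have join: "(s ++ s') |` A = s" "(s ++ s') |` B = s'" "dom (s ++ s') = A \<union> B"
    if "s' \<in> ?cols" for s'
  proof -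
    have dom': "dom s' = B" using that by (simp add: is_krelD(2)[OF Q'])
    have agree: "s |` (A \<inter> B) = s' |` (A \<inter> B)" using that by simp
    show "(s ++ s') |` A = s" by (rule map_add_restrict_left[OF s(1) dom' agree])
    show "(s ++ s') |` B = s'" by (rule map_add_restrict_right[OF s(1) dom' agree])
    show "dom (s ++ s') = A \<union> B" using s(1) dom' by (simp add: Un_commute)
  qed
  show "\<forall>s'\<in>?cols. (s ++ s') |` B = s'" using join by blast
  show "(\<lambda>s'. s ++ s') ` ?cols
      \<subseteq> {r. dom r = A \<union> B \<and> Q (r |` A) \<noteq> 0 \<and> Q' (r |` B) \<noteq> 0 \<and> r |` A = s}"
  proof
    fix r assume "r \<in> (\<lambda>s'. s ++ s') ` ?cols"
    then obtain s' where s': "s' \<in> ?cols" "r = s ++ s'" by blast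
    then show "r \<in> {r. dom r = A \<union> B \<and> Q (r |` A) \<noteq> 0 \<and> Q' (r |` B) \<noteq> 0 \<and> r |` A = s}"
      using join[OF s'(1)] s(2) by simp
  qed
  show "\<forall>r\<in>{r. dom r = A \<union> B \<and> Q (r |` A) \<noteq> 0 \<and> Q' (r |` B) \<noteq> 0 \<and> r |` A = s}.
      s ++ r |` B = r"
    using map_add_restrict_Un by blast
  have "r |` B \<in> ?cols" if "Q' (r |` B) \<noteq> 0" and rA: "r |` A = s" for r
  proof -
    have "r |` B |` (A \<inter> B) = s |` (A \<inter> B)"
      by (simp add: rA[symmetric] Int_absorb1 Int_commute)
    then show ?thesis using that(1) by simp
  qed
  then show "(\<lambda>r. r |` B) ` {r. dom r = A \<union> B \<and> Q (r |` A) \<noteq> 0 \<and> Q' (r |` B) \<noteq> 0 \<and> r |` A = s}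
      \<subseteq> ?cols"
    by blast
qed

lemma marginal_krel_join:
  assumes Q: "is_krel A Q" and Q': "is_krel B Q'"
    and rows: "\<And>s. Q s \<noteq> 0 \<Longrightarrow>
      (\<Sum>s'\<in>{s'. Q' s' \<noteq> 0 \<and> s' |` (A \<inter> B) = s |` (A \<inter> B)}. D s s') = Q s"
  shows "marginal (krel_join A B Q Q' D) A = Q"
proof
  fix s
  let ?W = "krel_join A B Q Q' D"
  let ?cols = "{s'. Q' s' \<noteq> 0 \<and> s' |` (A \<inter> B) = s |` (A \<inter> B)}"
  let ?fibre = "{r. dom r = A \<union> B \<and> Q (r |` A) \<noteq> 0 \<and> Q' (r |` B) \<noteq> 0 \<and> r |` A = s}"
  show "marginal ?W A s = Q s"
  proof (cases "Q s = 0")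
    case True
    then have "{r. ?W r \<noteq> 0 \<and> r |` A = s} = {}" by (auto simp: krel_join_def)
    then show ?thesis using True unfolding marginal_def by (simp only: sum.empty)
  next
    case False
    have dom_s: "dom s = A" using False by (rule is_krelD(2)[OF Q])
    have bij: "bij_betw (\<lambda>s'. s ++ s') ?cols ?fibre"
      using False by (intro bij_betw_join_fibre[OF Q' dom_s])
    have "marginal ?W A s = sum ?W ?fibre"
      by (subst marginal_eq_sum_superset[OF finite_join_support[OF Q Q']])
        (auto simp: krel_join_def split: if_splits intro: sum.cong)
    also have "\<dots> = (\<Sum>s'\<in>?cols. ?W (s ++ s'))"
      by (rule sum.reindex_bij_betw[OF bij, symmetric])
    also have "\<dots> = (\<Sum>s'\<in>?cols. D s s')"
    proof (rule sum.cong[OF refl])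
      fix s' assume s': "s' \<in> ?cols"
      have "s ++ s' \<in> ?fibre" using bij_betw_apply[OF bij s'] .
      moreover have "dom s' = B" using s' by (simp add: is_krelD(2)[OF Q'])
      then have "(s ++ s') |` B = s'" using s' by (simp add: map_add_restrict_right[OF dom_s])
      ultimately show "?W (s ++ s') = D s s'" using False by (simp add: krel_join_def)
    qed
    also have "\<dots> = Q s" using rows[OF False] .
    finally show ?thesis .
  qed
qed

lemma ex_fibrewise_transport:
  assumes pos: "positive_monoid TYPE('k::comm_monoid_add)"
    and tp: "transportation_property TYPE('k)"
    and Q: "is_krel A (Q :: _ \<Rightarrow> 'k)" and Q': "is_krel B Q'"
    and agree: "marginal Q (A \<inter> B) = marginal Q' (A \<inter> B)"
  obtains D where
    "\<And>s. Q s \<noteq> 0 \<Longrightarrow> (\<Sum>s'\<in>{s'. Q' s' \<noteq> 0 \<and> s' |` (A \<inter> B) = s |` (A \<inter> B)}. D s s') = Q s"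
    and "\<And>s'. Q' s' \<noteq> 0 \<Longrightarrow> (\<Sum>s\<in>{s. Q s \<noteq> 0 \<and> s |` (A \<inter> B) = s' |` (A \<inter> B)}. D s s') = Q' s'"
proof -
  let ?rows = "\<lambda>z. {s. Q s \<noteq> 0 \<and> s |` (A \<inter> B) = z}"
  let ?cols = "\<lambda>z. {s'. Q' s' \<noteq> 0 \<and> s' |` (A \<inter> B) = z}"
  have ex: "\<exists>d. (\<forall>s\<in>?rows z. (\<Sum>s'\<in>?cols z. d s s') = Q s) \<and>
      (\<forall>s'\<in>?cols z. (\<Sum>s\<in>?rows z. d s s') = Q' s')" for z
  proof -
    have "finite (?rows z)" "finite (?cols z)"
      using is_krelD(1)[OF Q] is_krelD(1)[OF Q'] by (auto elim: rev_finite_subset)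
    moreover have "sum Q (?rows z) = sum Q' (?cols z)"
      using fun_cong[OF agree, of z] by (simp add: marginal_def)
    ultimately show ?thesis by (rule transportation_finite_sets[OF pos tp])
  qed
  from choice[OF allI[OF ex]] obtain d where
    "\<forall>z. (\<forall>s\<in>?rows z. (\<Sum>s'\<in>?cols z. d z s s') = Q s) \<and>
      (\<forall>s'\<in>?cols z. (\<Sum>s\<in>?rows z. d z s s') = Q' s')" ..
  then have d_rows: "\<And>z s. s \<in> ?rows z \<Longrightarrow> (\<Sum>s'\<in>?cols z. d z s s') = Q s"
    and d_cols: "\<And>z s'. s' \<in> ?cols z \<Longrightarrow> (\<Sum>s\<in>?rows z. d z s s') = Q' s'"
    by simp_all
  show ?thesis
  proof (rule that[of "\<lambda>s s'. d (s |` (A \<inter> B)) s s'"])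
    fix s assume "Q s \<noteq> 0"
    then show "(\<Sum>s'\<in>?cols (s |` (A \<inter> B)). d (s |` (A \<inter> B)) s s') = Q s"
      by (intro d_rows) simp
  next
    fix s' assume "Q' s' \<noteq> 0"
    then have "(\<Sum>s\<in>?rows (s' |` (A \<inter> B)). d (s' |` (A \<inter> B)) s s') = Q' s'"
      by (intro d_cols) simp
    moreover have "(\<Sum>s\<in>?rows (s' |` (A \<inter> B)). d (s |` (A \<inter> B)) s s') =
        (\<Sum>s\<in>?rows (s' |` (A \<inter> B)). d (s' |` (A \<inter> B)) s s')"
      by (rule sum.cong) simp_all
    ultimately show "(\<Sum>s\<in>?rows (s' |` (A \<inter> B)). d (s |` (A \<inter> B)) s s') = Q' s'"
      by simp
  qed
qed

lemma ex_krel_join: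
  assumes pos: "positive_monoid TYPE('k::comm_monoid_add)"
    and tp: "transportation_property TYPE('k)"
    and Q: "is_krel A (Q :: _ \<Rightarrow> 'k)" and Q': "is_krel B Q'"
    and agree: "marginal Q (A \<inter> B) = marginal Q' (A \<inter> B)"
  shows "\<exists>W. is_krel (A \<union> B) W \<and> marginal W A = Q \<and> marginal W B = Q'"
proof -
  obtain D where
    rows: "\<And>s. Q s \<noteq> 0 \<Longrightarrow> (\<Sum>s'\<in>{s'. Q' s' \<noteq> 0 \<and> s' |` (A \<inter> B) = s |` (A \<inter> B)}. D s s') = Q s"
    and cols: "\<And>s'. Q' s' \<noteq> 0 \<Longrightarrow>
      (\<Sum>s\<in>{s. Q s \<noteq> 0 \<and> s |` (A \<inter> B) = s' |` (A \<inter> B)}. D s s') = Q' s'"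
    using ex_fibrewise_transport[OF assms] by blast
  have "marginal (krel_join A B Q Q' D) A = Q"
    using Q Q' rows by (rule marginal_krel_join)
  moreover have "marginal (krel_join A B Q Q' D) B = Q'"
    unfolding krel_join_commute[of A B]
  proof (rule marginal_krel_join[OF Q' Q])
    fix s' assume "Q' s' \<noteq> 0"
    then show "(\<Sum>s\<in>{s. Q s \<noteq> 0 \<and> s |` (B \<inter> A) = s' |` (B \<inter> A)}. D s s') = Q' s'"
      using cols by (simp add: Int_commute[of B A])
  qed
  ultimately show ?thesis using is_krel_join[OF Q Q'] by blast
qed

section \<open>Trees\<close>

lemma adj_iff [simp]: "(x, y) \<in> adj T \<longleftrightarrow> {x, y} \<in> T"
  by (simp add: adj_def)

lemma sym_adj: "sym (adj T)"
  by (auto simp: sym_def insert_commute)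

lemma rtrancl_adj_sym: "(x, y) \<in> (adj T)\<^sup>* \<Longrightarrow> (y, x) \<in> (adj T)\<^sup>*"
  by (meson sym_adj sym_rtrancl symD)

lemma adj_mono: "T \<subseteq> T' \<Longrightarrow> adj T \<subseteq> adj T'"
  unfolding adj_def by blast

lemma rtrancl_adj_mono: "T \<subseteq> T' \<Longrightarrow> (x, y) \<in> (adj T)\<^sup>* \<Longrightarrow> (x, y) \<in> (adj T')\<^sup>*"
  by (meson adj_mono rtrancl_mono subsetD)

lemma rtrancl_first_step: "(a, b) \<in> r\<^sup>* \<Longrightarrow> a \<noteq> b \<Longrightarrow> \<exists>c. (a, c) \<in> r"
  by (erule converse_rtranclE) auto

lemma is_tree_edgeE:
  assumes "is_tree V T" and "e \<in> T"
  obtains p q where "e = {p, q}" and "p \<in> V" and "q \<in> V" and "p \<noteq> q"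
  using assms unfolding is_tree_def by blast

lemma is_tree_edgeD:
  assumes "is_tree V T" and "{p, q} \<in> T"
  shows "p \<in> V" and "q \<in> V" and "p \<noteq> q"
  using assms by (auto elim!: is_tree_edgeE simp: doubleton_eq_iff)

lemma is_tree_connected: "is_tree V T \<Longrightarrow> x \<in> V \<Longrightarrow> y \<in> V \<Longrightarrow> (x, y) \<in> (adj T)\<^sup>*"
  unfolding is_tree_def by blast

lemma is_tree_bridge: "is_tree V T \<Longrightarrow> {x, y} \<in> T \<Longrightarrow> (x, y) \<notin> (adj (T - {{x, y}}))\<^sup>*"
  unfolding is_tree_def by blast

lemma is_tree_reachable_in:
  assumes "is_tree V T" and "T' \<subseteq> T" and "(p, q) \<in> (adj T')\<^sup>*" and "p \<in> V"
  shows "q \<in> V"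
  using assms(3,4)
proof (induction rule: rtrancl_induct)
  case (step y z)
  then have "{y, z} \<in> T" using assms(2) by auto
  then show ?case by (rule is_tree_edgeD[OF assms(1)])
qed

lemma is_tree_subtree:
  assumes "is_tree V T" and "T' \<subseteq> {{x, y} |x y. x \<in> V' \<and> y \<in> V' \<and> x \<noteq> y}"
    and "T' \<subseteq> T" and "\<And>x y. x \<in> V' \<Longrightarrow> y \<in> V' \<Longrightarrow> (x, y) \<in> (adj T')\<^sup>*"
  shows "is_tree V' T'"
  unfolding is_tree_def
proof (intro conjI assms(2) ballI allI impI assms(4))
  fix p q assume "{p, q} \<in> T'"
  then have "(p, q) \<notin> (adj (T - {{p, q}}))\<^sup>*" using assms(3) by (intro is_tree_bridge[OF assms(1)]) blast
  then show "(p, q) \<notin> (adj (T' - {{p, q}}))\<^sup>*"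
    using rtrancl_adj_mono[of "T' - {{p, q}}" "T - {{p, q}}"] assms(3) by blast
qed

definition tree_leaf :: "'b set set \<Rightarrow> 'b \<Rightarrow> 'b \<Rightarrow> bool" where
  "tree_leaf T x y \<longleftrightarrow> {x, y} \<in> T \<and> (\<forall>w. {x, w} \<in> T \<longrightarrow> w = y)"

lemma rtrancl_adj_avoid_leaf:
  assumes "(a, b) \<in> (adj T)\<^sup>*" and "a \<noteq> x" and "b \<noteq> x"
    and leaf: "\<And>w. {x, w} \<in> T \<Longrightarrow> w = y"
  shows "(a, b) \<in> (adj {e\<in>T. x \<notin> e})\<^sup>*"
proof -
  let ?T = "{e\<in>T. x \<notin> e}"
  \<comment> \<open>a path that enters the leaf x has just left y\<close>
  have "(c \<noteq> x \<longrightarrow> (a, c) \<in> (adj ?T)\<^sup>*) \<and> (c = x \<longrightarrow> (a, y) \<in> (adj ?T)\<^sup>*)"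
    if "(a, c) \<in> (adj T)\<^sup>*" for c
    using that
  proof (induction rule: rtrancl_induct)
    case (step c d)
    then have cd: "{c, d} \<in> T" by simp
    show ?case
    proof (cases "c = x \<or> d = x")
      case True
      then have "c = x \<and> d = y \<or> d = x \<and> c = y" using leaf cd by (metis insert_commute)
      then show ?thesis using step.IH by auto
    next
      case False
      then have "(c, d) \<in> adj ?T" using cd by auto
      then show ?thesis using step.IH False by (meson rtrancl_into_rtrancl)
    qed
  qed (use assms(2) in simp)
  then show ?thesis using assms(1,3) by blast
qed

definition branch :: "'b set set \<Rightarrow> 'b \<Rightarrow> 'b \<Rightarrow> 'b set" where
  "branch T y z = {w. (z, w) \<in> (adj (T - {{y, z}}))\<^sup>*}"

lemma branch_closed:
  assumes "x \<in> branch T y z" and "{x, w} \<in> T" and "{x, w} \<noteq> {y, z}"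
  shows "w \<in> branch T y z"
proof -
  have "(x, w) \<in> adj (T - {{y, z}})" using assms(2,3) by simp
  with assms(1) show ?thesis unfolding branch_def by (simp add: rtrancl_into_rtrancl)
qed

lemma branch_subset:
  assumes "is_tree V T" and "{y, z} \<in> T"
  shows "branch T y z \<subseteq> V - {y}"
proof
  fix w assume "w \<in> branch T y z"
  then have zw: "(z, w) \<in> (adj (T - {{y, z}}))\<^sup>*" by (simp add: branch_def)
  have "w \<in> V" by (rule is_tree_reachable_in[OF assms(1) Diff_subset zw is_tree_edgeD(2)[OF assms]])
  moreover have "w \<noteq> y"
  proof
    assume "w = y"
    with zw have "(y, z) \<in> (adj (T - {{y, z}}))\<^sup>*" by (simp add: rtrancl_adj_sym)
    with is_tree_bridge[OF assms] show False by contradiction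
  qed
  ultimately show "w \<in> V - {y}" by blast
qed

lemma is_tree_branch:
  assumes "is_tree V T" and "{y, z} \<in> T"
  shows "is_tree (branch T y z) {f\<in>T. f \<subseteq> branch T y z}"
proof (rule is_tree_subtree[OF assms(1)])
  let ?C = "branch T y z" and ?T = "{f\<in>T. f \<subseteq> branch T y z}"
  show "?T \<subseteq> {{x, y} |x y. x \<in> ?C \<and> y \<in> ?C \<and> x \<noteq> y}"
  proof
    fix f assume f: "f \<in> ?T"
    then obtain p q where "f = {p, q}" "p \<noteq> q" by (auto elim: is_tree_edgeE[OF assms(1)])
    with f show "f \<in> {{x, y} |x y. x \<in> ?C \<and> y \<in> ?C \<and> x \<noteq> y}" by auto
  qed
  have from_z: "(z, p) \<in> (adj ?T)\<^sup>*" if "p \<in> ?C" for p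
  proof -
    have "(z, p) \<in> (adj (T - {{y, z}}))\<^sup>*" using that by (simp add: branch_def)
    then show ?thesis
    proof (induction rule: rtrancl_induct)
      case (step q q')
      have "q \<in> ?C" "q' \<in> ?C"
        using step(1) rtrancl_into_rtrancl[OF step(1,2)] by (simp_all add: branch_def)
      with step have "(q, q') \<in> adj ?T" by auto
      with step.IH show ?case by (rule rtrancl_into_rtrancl)
    qed simp
  qed
  fix p q assume "p \<in> ?C" "q \<in> ?C"
  show "(p, q) \<in> (adj ?T)\<^sup>*"
    using rtrancl_adj_sym[OF from_z[OF \<open>p \<in> ?C\<close>]] from_z[OF \<open>q \<in> ?C\<close>] by (rule rtrancl_trans)
qed auto

lemma tree_has_leaf:
  assumes "finite V" and "is_tree V T" and "y \<in> V" and "x0 \<in> V" and "x0 \<noteq> y"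
  shows "\<exists>x\<in>V. x \<noteq> y \<and> (\<exists>z. tree_leaf T x z)"
  using assms
proof (induction "card V" arbitrary: V T y x0 rule: less_induct)
  case less
  note tree = \<open>is_tree V T\<close>
  have "(y, x0) \<in> (adj T)\<^sup>*" using is_tree_connected[OF tree less.prems(3,4)] .
  then have "\<exists>z. (y, z) \<in> adj T" using less.prems(5) by (intro rtrancl_first_step) auto
  then obtain z where "(y, z) \<in> adj T" ..
  then have yz: "{y, z} \<in> T" by simp
  have "z \<in> V" "z \<noteq> y" using is_tree_edgeD[OF tree yz] by auto
  show ?case
  proof (cases "\<forall>w. {z, w} \<in> T \<longrightarrow> w = y")
    case True
    moreover have "{z, y} \<in> T" using yz by (simp add: insert_commute)
    ultimately have "tree_leaf T z y" unfolding tree_leaf_def by blast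
    then show ?thesis using \<open>z \<in> V\<close> \<open>z \<noteq> y\<close> by blast
  next
    case False
    let ?C = "branch T y z" and ?T = "{f\<in>T. f \<subseteq> branch T y z}"
    obtain w where zw: "{z, w} \<in> T" "w \<noteq> y" using False by blast
    have zC: "z \<in> ?C" by (simp add: branch_def)
    have wC: "w \<in> ?C" using branch_closed[OF zC zw(1)] zw(2) by (auto simp: doubleton_eq_iff)
    have "w \<noteq> z" using is_tree_edgeD[OF tree zw(1)] by simp
    have CV: "?C \<subseteq> V - {y}" by (rule branch_subset[OF tree yz])
    then have "?C \<subset> V" using less.prems(3) by blast
    then have "card ?C < card V" by (rule psubset_card_mono[OF less.prems(1)])
    then obtain x z' where x: "x \<in> ?C" "x \<noteq> z" "tree_leaf ?T x z'"
      using less.hyps[OF _ finite_subset[OF _ less.prems(1)] is_tree_branch[OF tree yz] zC wC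
        \<open>w \<noteq> z\<close>] CV by blast
    have "x \<noteq> y" using x(1) CV by blast
    have "w' = z'" if "{x, w'} \<in> T" for w'
    proof -
      have "{x, w'} \<noteq> {y, z}" using \<open>x \<noteq> y\<close> x(2) by (auto simp: doubleton_eq_iff)
      then have "w' \<in> ?C" by (rule branch_closed[OF x(1) that])
      then show "w' = z'" using x(1,3) that by (simp add: tree_leaf_def)
    qed
    then have "tree_leaf T x z'" using x(3) by (simp add: tree_leaf_def)
    then show ?thesis using x(1) CV \<open>x \<noteq> y\<close> by blast
  qed
qed

section \<open>Acyclic hypergraphs have the local-to-global property\<close>

definition join_connected :: "'a set set \<Rightarrow> 'a set set set \<Rightarrow> 'a \<Rightarrow> bool" where
  "join_connected E T v \<longleftrightarrow> (\<forall>X\<in>{X\<in>E. v \<in> X}. \<forall>Y\<in>{X\<in>E. v \<in> X}.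
     (X, Y) \<in> (adj {e\<in>T. e \<subseteq> {X\<in>E. v \<in> X}})\<^sup>*)"

lemma join_tree_iff: "join_tree E T \<longleftrightarrow> is_tree E T \<and> (\<forall>v. join_connected E T v)"
  by (simp add: join_tree_def join_connected_def Let_def)

lemma join_tree_remove_leaf:
  assumes jt: "join_tree E T" and leaf: "tree_leaf T X Y"
  shows "join_tree (E - {X}) {e\<in>T. X \<notin> e}"
proof -
  let ?T = "{e\<in>T. X \<notin> e}"
  have tree: "is_tree E T" using jt by (simp add: join_tree_iff)
  have only_Y: "\<And>w. {X, w} \<in> T \<Longrightarrow> w = Y" using leaf by (simp add: tree_leaf_def)
  have "is_tree (E - {X}) ?T"
  proof (rule is_tree_subtree[OF tree])
    show "?T \<subseteq> {{x, y} |x y. x \<in> E - {X} \<and> y \<in> E - {X} \<and> x \<noteq> y}"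
    proof
      fix f assume f: "f \<in> ?T"
      then have "f \<in> T" by simp
      then obtain p q where "f = {p, q}" "p \<in> E" "q \<in> E" "p \<noteq> q"
        by (rule is_tree_edgeE[OF tree])
      with f show "f \<in> {{x, y} |x y. x \<in> E - {X} \<and> y \<in> E - {X} \<and> x \<noteq> y}" by auto
    qed
    fix p q assume "p \<in> E - {X}" "q \<in> E - {X}"
    then show "(p, q) \<in> (adj ?T)\<^sup>*"
      using rtrancl_adj_avoid_leaf[OF is_tree_connected[OF tree] _ _ only_Y] by simp
  qed auto
  moreover have "join_connected (E - {X}) ?T v" for v
    unfolding join_connected_def
  proof (intro ballI)
    let ?S = "{Z\<in>E. v \<in> Z}" and ?S' = "{Z\<in>E - {X}. v \<in> Z}"
    fix Z1 Z2 assume Z: "Z1 \<in> ?S'" "Z2 \<in> ?S'"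
    then have "(Z1, Z2) \<in> (adj {e\<in>T. e \<subseteq> ?S})\<^sup>*"
      using jt by (simp add: join_tree_iff join_connected_def)
    then have "(Z1, Z2) \<in> (adj {e\<in>{e\<in>T. e \<subseteq> ?S}. X \<notin> e})\<^sup>*"
      by (rule rtrancl_adj_avoid_leaf[where y = Y]) (use Z only_Y in auto)
    then show "(Z1, Z2) \<in> (adj {e\<in>?T. e \<subseteq> ?S'})\<^sup>*"
      by (rule rtrancl_adj_mono[rotated]) blast
  qed
  ultimately show ?thesis by (simp add: join_tree_iff)
qed

lemma join_tree_leaf_inter:
  assumes jt: "join_tree E T" and leaf: "tree_leaf T X Y" and Z: "Z \<in> E" "Z \<noteq> X"
  shows "X \<inter> Z \<subseteq> Y"
proof
  fix v assume v: "v \<in> X \<inter> Z"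
  let ?S = "{Z\<in>E. v \<in> Z}"
  have "X \<in> E" using leaf jt by (auto simp: tree_leaf_def join_tree_iff intro: is_tree_edgeD)
  then have "(X, Z) \<in> (adj {e\<in>T. e \<subseteq> ?S})\<^sup>*"
    using jt v Z(1) by (simp add: join_tree_iff join_connected_def)
  then have "\<exists>w. (X, w) \<in> adj {e\<in>T. e \<subseteq> ?S}"
    using Z(2) by (intro rtrancl_first_step) auto
  then obtain w where "(X, w) \<in> adj {e\<in>T. e \<subseteq> ?S}" ..
  then have "{X, w} \<in> T" "v \<in> w" by auto
  then show "v \<in> Y" using leaf by (simp add: tree_leaf_def)
qed

lemma globally_consistent_insert_ear:
  assumes pos: "positive_monoid TYPE('k::comm_monoid_add)"
    and tp: "transportation_property TYPE('k)"
    and glob: "globally_consistent E (R :: _ \<Rightarrow> _ \<Rightarrow> 'k)"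
    and pc: "pairwise_consistent (insert X E) R" and RX: "is_krel X (R X)"
    and Y: "Y \<in> E" and ear: "\<forall>Z\<in>E. X \<inter> Z \<subseteq> Y"
  shows "globally_consistent (insert X E) R"
proof -
  obtain W' where W': "is_krel (\<Union>E) W'" "\<forall>Z\<in>E. marginal W' Z = R Z"
    using glob unfolding globally_consistent_def by blast
  obtain WXY where WXY: "is_krel (X \<union> Y) WXY" "marginal WXY X = R X" "marginal WXY Y = R Y"
    using pc Y unfolding pairwise_consistent_def by blast
  have inter: "\<Union>E \<inter> X = X \<inter> Y" using ear Y by blast
  have "marginal W' (X \<inter> Y) = marginal (marginal W' Y) (X \<inter> Y)"
    using W'(1) Y by (simp add: marginal_marginal Sup_upper le_infI2)
  also have "\<dots> = marginal (marginal WXY Y) (X \<inter> Y)" using W'(2) WXY(3) Y by simp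
  also have "\<dots> = marginal (marginal WXY X) (X \<inter> Y)"
    using WXY(1) by (simp add: marginal_marginal)
  finally have "marginal W' (\<Union>E \<inter> X) = marginal (R X) (\<Union>E \<inter> X)"
    unfolding inter WXY(2) .
  then obtain W where W: "is_krel (\<Union>E \<union> X) W" "marginal W (\<Union>E) = W'" "marginal W X = R X"
    using ex_krel_join[OF pos tp W'(1) RX] by blast
  have "marginal W Z = R Z" if "Z \<in> E" for Z
  proof -
    have "marginal W Z = marginal (marginal W (\<Union>E)) Z"
      using W(1) that by (simp add: marginal_marginal Sup_upper)
    then show ?thesis using W(2) W'(2) that by simp
  qed
  then show ?thesis unfolding globally_consistent_def using W(1,3) by (auto simp: Un_commute)
qed

lemma join_tree_globally_consistent:
  assumes pos: "positive_monoid TYPE('k::comm_monoid_add)"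
    and tp: "transportation_property TYPE('k)"
    and "finite E" and "join_tree E T" and "\<forall>X\<in>E. is_krel X (R X :: _ \<Rightarrow> 'k)"
    and "pairwise_consistent E R"
  shows "globally_consistent E R"
  using assms(3-)
proof (induction "card E" arbitrary: E T rule: less_induct)
  case less
  have tree: "is_tree E T" using less.prems(2) by (simp add: join_tree_iff)
  show ?case
  proof (cases "\<exists>y\<in>E. \<exists>x0\<in>E. x0 \<noteq> y")
    case False
    then consider "E = {}" | X where "E = {X}" by blast
    then show ?thesis
    proof cases
      case 1
      have "is_krel {} (\<lambda>_. 0 :: 'k)" by (simp add: is_krel_def)
      then show ?thesis unfolding globally_consistent_def 1 by auto
    next
      case 2
      then have "is_krel X (R X)" using less.prems(3) by simp
      then show ?thesis unfolding globally_consistent_def 2 using marginal_full by auto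
    qed
  next
    case True
    then obtain y x0 where "y \<in> E" "x0 \<in> E" "x0 \<noteq> y" by blast
    then obtain X Y where X: "X \<in> E" and leaf: "tree_leaf T X Y"
      using tree_has_leaf[OF less.prems(1) tree] by blast
    have "{X, Y} \<in> T" using leaf by (simp add: tree_leaf_def)
    then have Y: "Y \<in> E - {X}" using is_tree_edgeD[OF tree] by blast
    have glob: "globally_consistent (E - {X}) R"
    proof (rule less.hyps)
      show "card (E - {X}) < card E" using less.prems(1) X by (rule card_Diff1_less)
      show "join_tree (E - {X}) {e\<in>T. X \<notin> e}"
        by (rule join_tree_remove_leaf[OF less.prems(2) leaf])
      show "pairwise_consistent (E - {X}) R"
        using less.prems(4) unfolding pairwise_consistent_def by blast
    qed (use less.prems in auto)
    have ear: "\<forall>Z\<in>E - {X}. X \<inter> Z \<subseteq> Y"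
      using join_tree_leaf_inter[OF less.prems(2) leaf] by blast
    have E: "insert X (E - {X}) = E" using X by blast
    have "globally_consistent (insert X (E - {X})) R"
      by (rule globally_consistent_insert_ear[OF pos tp glob _ _ Y ear])
        (use less.prems(3,4) X E in simp_all)
    then show ?thesis unfolding E .
  qed
qed

section \<open>GYO reduction\<close>

lemma rtrancl_adj_isolated:
  assumes "(x, y) \<in> (adj T)\<^sup>*" and "\<And>w. {x, w} \<notin> T"
  shows "y = x"
  using assms by (cases rule: converse_rtranclE) auto

lemma is_tree_insert_leaf_bridge:
  assumes tree: "is_tree E T" and X: "X \<notin> E" and Y: "Y \<in> E"
    and pq: "{p, q} \<in> insert {X, Y} T"
  shows "(p, q) \<notin> (adj (insert {X, Y} T - {{p, q}}))\<^sup>*"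
proof -
  let ?T = "insert {X, Y} T"
  have no_X: "{X, w} \<notin> T" for w
    using is_tree_edgeD(1)[OF tree] X by blast
  show ?thesis
  proof (cases "{p, q} = {X, Y}")
    case True
    then have "?T - {{p, q}} = T" using no_X by auto
    moreover have "(p = X \<and> q = Y) \<or> (p = Y \<and> q = X)" using True by (auto simp: doubleton_eq_iff)
    moreover have "X \<noteq> Y" using X Y by blast
    ultimately show ?thesis
      using rtrancl_adj_isolated[OF _ no_X] rtrancl_adj_sym by metis
  next
    case False
    then have pqT: "{p, q} \<in> T" using pq by simp
    then have "p \<noteq> X" "q \<noteq> X" using is_tree_edgeD[OF tree pqT] X by auto
    show ?thesis
    proof
      assume "(p, q) \<in> (adj (?T - {{p, q}}))\<^sup>*"
      then have "(p, q) \<in> (adj {e\<in>?T - {{p, q}}. X \<notin> e})\<^sup>*"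
        by (rule rtrancl_adj_avoid_leaf[where y = Y]) (use \<open>p \<noteq> X\<close> \<open>q \<noteq> X\<close> no_X in
          \<open>auto simp: doubleton_eq_iff\<close>)
      then have "(p, q) \<in> (adj (T - {{p, q}}))\<^sup>*" by (rule rtrancl_adj_mono[rotated]) blast
      then show False using is_tree_bridge[OF tree pqT] by contradiction
    qed
  qed
qed

lemma is_tree_insert_leaf:
  assumes tree: "is_tree E T" and X: "X \<notin> E" and Y: "Y \<in> E"
  shows "is_tree (insert X E) (insert {X, Y} T)"
  unfolding is_tree_def
proof (intro conjI ballI allI impI)
  let ?T = "insert {X, Y} T"
  have "X \<noteq> Y" using X Y by blast
  then show "?T \<subseteq> {{x, y} |x y. x \<in> insert X E \<and> y \<in> insert X E \<and> x \<noteq> y}"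
    using tree Y unfolding is_tree_def by blast
  have to_Y: "(p, Y) \<in> (adj ?T)\<^sup>*" if "p \<in> insert X E" for p
  proof (cases "p = X")
    case False
    then have "(p, Y) \<in> (adj T)\<^sup>*" using is_tree_connected[OF tree _ Y] that by simp
    then show ?thesis by (rule rtrancl_adj_mono[rotated]) blast
  qed (simp add: r_into_rtrancl)
  fix p q assume "p \<in> insert X E" "q \<in> insert X E"
  show "(p, q) \<in> (adj ?T)\<^sup>*"
    using to_Y[OF \<open>p \<in> insert X E\<close>] rtrancl_adj_sym[OF to_Y[OF \<open>q \<in> insert X E\<close>]]
    by (rule rtrancl_trans)
qed (rule is_tree_insert_leaf_bridge[OF assms])

lemma join_connected_insert_leaf:
  assumes jc: "join_connected E T v" and Y: "Y \<in> E" and sub: "v \<in> X \<Longrightarrow> v \<in> Y"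
  shows "join_connected (insert X E) (insert {X, Y} T) v"
  unfolding join_connected_def
proof (intro ballI)
  let ?S = "{Z\<in>insert X E. v \<in> Z}" and ?S' = "{Z\<in>E. v \<in> Z}"
  let ?T = "{e\<in>insert {X, Y} T. e \<subseteq> ?S}"
  have old: "(Z1, Z2) \<in> (adj ?T)\<^sup>*" if "Z1 \<in> ?S'" "Z2 \<in> ?S'" for Z1 Z2
  proof -
    have "(Z1, Z2) \<in> (adj {e\<in>T. e \<subseteq> ?S'})\<^sup>*" using jc that unfolding join_connected_def by blast
    then show ?thesis by (rule rtrancl_adj_mono[rotated]) blast
  qed
  fix Z1 Z2 assume Z: "Z1 \<in> ?S" "Z2 \<in> ?S"
  show "(Z1, Z2) \<in> (adj ?T)\<^sup>*"
  proof (cases "v \<in> X")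
    case False
    then show ?thesis using Z old by auto
  next
    case True
    then have "Y \<in> ?S'" using sub Y by simp
    have to_Y: "(Z, Y) \<in> (adj ?T)\<^sup>*" if "Z \<in> ?S" for Z
    proof (cases "Z = X")
      case True
      then show ?thesis using \<open>v \<in> X\<close> \<open>Y \<in> ?S'\<close> by (simp add: r_into_rtrancl)
    next
      case False
      then show ?thesis using that old \<open>Y \<in> ?S'\<close> by simp
    qed
    show ?thesis using to_Y[OF Z(1)] rtrancl_adj_sym[OF to_Y[OF Z(2)]] by (rule rtrancl_trans)
  qed
qed

lemma join_connected_if_unshared:
  assumes "\<And>Z1 Z2. Z1 \<in> E \<Longrightarrow> Z2 \<in> E \<Longrightarrow> v \<in> Z1 \<Longrightarrow> v \<in> Z2 \<Longrightarrow> Z1 = Z2"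
  shows "join_connected E T v"
  using assms unfolding join_connected_def by auto

text \<open>A configuration on which GYO reduction (deleting edges contained in other edges and
  vertices lying in a single edge) gets stuck: M is the reduced family of traces of E on the
  remaining vertices V.\<close>

locale gyo_obstruction =
  fixes E :: "'a set set" and V :: "'a set" and M :: "'a set set"
  assumes finite_V: "finite V" and finite_M: "finite M" and M_nonempty: "M \<noteq> {}"
    and M_members_nonempty: "Y \<in> M \<Longrightarrow> Y \<noteq> {}" and M_subset: "Y \<in> M \<Longrightarrow> Y \<subseteq> V"
    and M_incomparable: "Y \<in> M \<Longrightarrow> Y' \<in> M \<Longrightarrow> Y \<subseteq> Y' \<Longrightarrow> Y = Y'"
    and V_shared: "v \<in> V \<Longrightarrow> \<exists>Y1\<in>M. \<exists>Y2\<in>M. Y1 \<noteq> Y2 \<and> v \<in> Y1 \<and> v \<in> Y2"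
    and E_covered: "X \<in> E \<Longrightarrow> \<exists>Y\<in>M. X \<inter> V \<subseteq> Y"
    and M_traces: "Y \<in> M \<Longrightarrow> \<exists>X\<in>E. X \<inter> V = Y"

lemma (in gyo_obstruction) gyo_obstruction_insert:
  assumes "Y \<in> E" and "X \<inter> V \<subseteq> Y \<inter> V"
  shows "gyo_obstruction (insert X E) V M"
proof
  obtain Y' where "Y' \<in> M" "Y \<inter> V \<subseteq> Y'" using E_covered[OF assms(1)] by blast
  then show "\<exists>Y'\<in>M. Z \<inter> V \<subseteq> Y'" if "Z \<in> insert X E" for Z
    using that assms(2) E_covered by blast
  show "\<exists>Z\<in>insert X E. Z \<inter> V = Y'" if "Y' \<in> M" for Y'
    using M_traces[OF that] by blast
qed (fact finite_V finite_M M_nonempty M_members_nonempty M_subset M_incomparable V_shared)+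

lemma gyo_obstruction_traces:
  assumes "finite E" and "finite U" and two: "\<exists>Z1\<in>E. \<exists>Z2\<in>E. Z1 \<noteq> Z2"
    and reduced: "\<And>X X'. X \<in> E \<Longrightarrow> X' \<in> E \<Longrightarrow> X \<inter> U \<subseteq> X' \<inter> U \<Longrightarrow> X = X'"
    and shared: "\<And>v. v \<in> U \<Longrightarrow> \<exists>Z1\<in>E. \<exists>Z2\<in>E. Z1 \<noteq> Z2 \<and> v \<in> Z1 \<and> v \<in> Z2"
  shows "gyo_obstruction E U ((\<lambda>X. X \<inter> U) ` E)"
proof
  let ?M = "(\<lambda>X. X \<inter> U) ` E"
  show "finite U" "finite ?M" "?M \<noteq> {}" using assms(1,2) two by auto
  fix Y assume "Y \<in> ?M"
  then obtain X where X: "X \<in> E" "Y = X \<inter> U" by blast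
  obtain X' where "X' \<in> E" "X' \<noteq> X" using two by blast
  then show "Y \<noteq> {}" using reduced[OF X(1)] X(2) by blast
  show "Y \<subseteq> U" using X(2) by blast
  show "\<exists>X\<in>E. X \<inter> U = Y" using X by blast
  show "Y = Y'" if "Y' \<in> ?M" "Y \<subseteq> Y'" for Y' using that X reduced by blast
next
  let ?M = "(\<lambda>X. X \<inter> U) ` E"
  fix v assume "v \<in> U"
  then obtain Z1 Z2 where Z: "Z1 \<in> E" "Z2 \<in> E" "Z1 \<noteq> Z2" "v \<in> Z1" "v \<in> Z2"
    using shared by blast
  then have "Z1 \<inter> U \<noteq> Z2 \<inter> U" using reduced by blast
  with Z \<open>v \<in> U\<close> show "\<exists>Y1\<in>?M. \<exists>Y2\<in>?M. Y1 \<noteq> Y2 \<and> v \<in> Y1 \<and> v \<in> Y2"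
    by (intro bexI[of _ "Z1 \<inter> U"] bexI[of _ "Z2 \<inter> U"]) auto
next
  fix X assume "X \<in> E"
  then show "\<exists>Y\<in>(\<lambda>X. X \<inter> U) ` E. X \<inter> U \<subseteq> Y" by blast
qed

definition join_tree_on :: "'a set set \<Rightarrow> 'a set \<Rightarrow> 'a set set set \<Rightarrow> bool" where
  "join_tree_on E U T \<longleftrightarrow> is_tree E T \<and> (\<forall>v\<in>U. join_connected E T v)"

lemma join_tree_on_insert_ear:
  assumes "join_tree_on (E - {X}) U T" and "X \<in> E" and "Y \<in> E" and "X \<noteq> Y"
    and "X \<inter> U \<subseteq> Y \<inter> U"
  shows "join_tree_on E U (insert {X, Y} T)"
proof -
  have E: "insert X (E - {X}) = E" using assms(2) by blast
  have "is_tree (insert X (E - {X})) (insert {X, Y} T)"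
    using assms(1,3,4) by (intro is_tree_insert_leaf) (auto simp: join_tree_on_def)
  moreover have "join_connected (insert X (E - {X})) (insert {X, Y} T) v" if "v \<in> U" for v
    using assms(1,3,4,5) that by (intro join_connected_insert_leaf) (auto simp: join_tree_on_def)
  ultimately show ?thesis unfolding E join_tree_on_def by blast
qed

lemma is_tree_singleton_or_empty:
  assumes "\<And>Z1 Z2. Z1 \<in> E \<Longrightarrow> Z2 \<in> E \<Longrightarrow> Z1 = Z2"
  shows "is_tree E {}"
proof -
  have "(x, y) \<in> (adj {})\<^sup>*" if "x \<in> E" "y \<in> E" for x y
    using assms[OF that] by simp
  then show ?thesis unfolding is_tree_def by simp
qed

definition join_tree_or_obstruction :: "'a set set \<Rightarrow> 'a set \<Rightarrow> bool" where
  "join_tree_or_obstruction E U \<longleftrightarrow>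
     (\<exists>T. join_tree_on E U T) \<or> (\<exists>V M. V \<subseteq> U \<and> gyo_obstruction E V M)"

lemma join_tree_or_obstruction_insert_ear:
  assumes "join_tree_or_obstruction (E - {X}) U"
    and ear: "X \<in> E" "Y \<in> E" "X \<noteq> Y" "X \<inter> U \<subseteq> Y \<inter> U"
  shows "join_tree_or_obstruction E U"
  using assms(1) unfolding join_tree_or_obstruction_def
proof (elim disjE exE conjE)
  fix T assume "join_tree_on (E - {X}) U T"
  then show "(\<exists>T. join_tree_on E U T) \<or> (\<exists>V M. V \<subseteq> U \<and> gyo_obstruction E V M)"
    using join_tree_on_insert_ear[OF _ ear] by blast
next
  fix V M assume "V \<subseteq> U" "gyo_obstruction (E - {X}) V M"
  then have "gyo_obstruction (insert X (E - {X})) V M"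
    using ear by (intro gyo_obstruction.gyo_obstruction_insert[where Y = Y]) auto
  then show "(\<exists>T. join_tree_on E U T) \<or> (\<exists>V M. V \<subseteq> U \<and> gyo_obstruction E V M)"
    using \<open>V \<subseteq> U\<close> ear(1) by (auto simp: insert_absorb)
qed

lemma join_tree_or_obstruction_insert_vertex:
  assumes "join_tree_or_obstruction E (U - {v})"
    and unshared: "\<And>Z1 Z2. Z1 \<in> E \<Longrightarrow> Z2 \<in> E \<Longrightarrow> v \<in> Z1 \<Longrightarrow> v \<in> Z2 \<Longrightarrow> Z1 = Z2"
  shows "join_tree_or_obstruction E U"
  using assms(1) unfolding join_tree_or_obstruction_def
proof (elim disjE exE conjE)
  fix T assume "join_tree_on E (U - {v}) T"
  moreover have "join_connected E T v" using unshared by (rule join_connected_if_unshared)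
  ultimately have "join_tree_on E U T" unfolding join_tree_on_def by blast
  then show "(\<exists>T. join_tree_on E U T) \<or> (\<exists>V M. V \<subseteq> U \<and> gyo_obstruction E V M)" by blast
qed blast

lemma gyo_reduction: "finite E \<Longrightarrow> finite U \<Longrightarrow> join_tree_or_obstruction E U"
proof (induction "card E + card U" arbitrary: E U rule: less_induct)
  case less
  show ?case
  proof (cases "\<exists>X\<in>E. \<exists>Y\<in>E. X \<noteq> Y \<and> X \<inter> U \<subseteq> Y \<inter> U")
    case True
    then obtain X Y where ear: "X \<in> E" "Y \<in> E" "X \<noteq> Y" "X \<inter> U \<subseteq> Y \<inter> U" by blast
    have "card (E - {X}) + card U < card E + card U"
      using card_Diff1_less[OF less.prems(1) ear(1)] by simp
    then have "join_tree_or_obstruction (E - {X}) U" using less.hyps less.prems by simp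
    then show ?thesis using ear by (rule join_tree_or_obstruction_insert_ear)
  next
    case no_ear: False
    show ?thesis
    proof (cases "\<exists>v\<in>U. \<forall>Z1\<in>E. \<forall>Z2\<in>E. v \<in> Z1 \<longrightarrow> v \<in> Z2 \<longrightarrow> Z1 = Z2")
      case True
      then obtain v where v: "v \<in> U" "\<forall>Z1\<in>E. \<forall>Z2\<in>E. v \<in> Z1 \<longrightarrow> v \<in> Z2 \<longrightarrow> Z1 = Z2"
        by blast
      have "card E + card (U - {v}) < card E + card U"
        using card_Diff1_less[OF less.prems(2) v(1)] by simp
      then have "join_tree_or_obstruction E (U - {v})" using less.hyps less.prems by simp
      then show ?thesis by (rule join_tree_or_obstruction_insert_vertex) (use v(2) in blast)
    next
      case shared: False
      show ?thesis
      proof (cases "\<exists>Z1\<in>E. \<exists>Z2\<in>E. Z1 \<noteq> Z2")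
        case True
        have "X = X'" if "X \<in> E" "X' \<in> E" "X \<inter> U \<subseteq> X' \<inter> U" for X X'
          using no_ear that by blast
        moreover have "\<exists>Z1\<in>E. \<exists>Z2\<in>E. Z1 \<noteq> Z2 \<and> v \<in> Z1 \<and> v \<in> Z2" if "v \<in> U" for v
          using shared that by blast
        ultimately have "gyo_obstruction E U ((\<lambda>X. X \<inter> U) ` E)"
          by (rule gyo_obstruction_traces[OF less.prems True])
        then show ?thesis unfolding join_tree_or_obstruction_def by blast
      next
        case False
        then have "join_tree_on E U {}"
          by (simp add: join_tree_on_def is_tree_singleton_or_empty join_connected_if_unshared)
        then show ?thesis unfolding join_tree_or_obstruction_def by blast
      qed
    qed
  qed
qed

lemma not_acyclic_gyo_obstruction:
  assumes "hypergraph E" and "\<not> acyclic_hypergraph E"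
  shows "\<exists>V M. gyo_obstruction E V M"
proof -
  have "finite E" "finite (\<Union>E)" using assms(1) by (auto simp: hypergraph_def)
  moreover have "\<not> join_tree_on E (\<Union>E) T" for T
  proof
    assume "join_tree_on E (\<Union>E) T"
    then have "join_tree E T"
      by (auto simp: join_tree_on_def join_tree_iff join_connected_def)
    with assms(2) show False by (auto simp: acyclic_hypergraph_def)
  qed
  ultimately show ?thesis using gyo_reduction unfolding join_tree_or_obstruction_def by blast
qed

section \<open>A mod 3 counterexample on a GYO obstruction\<close>

lemma sum_mod3_residues:
  fixes x :: "'k::comm_monoid_add"
  assumes "c0 = 1 \<or> c0 = (2::nat)" and "b < (3::nat)"
  shows "(\<Sum>k<3. if (c0 * k + s) mod 3 = b then x else 0) = x"
proof -
  have sum3: "(\<Sum>k<3. f k) = f 0 + f 1 + f (2::nat)" for f :: "nat \<Rightarrow> 'k"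
    by (simp add: eval_nat_numeral add.assoc)
  have "(\<Sum>k<3. if (c0 * k + s) mod 3 = b then x else 0) =
      (\<Sum>k<3. if (c0 * k + s mod 3) mod 3 = b then x else 0)"
    by (simp add: mod_add_right_eq)
  also have "\<dots> = x"
  proof -
    have "s mod 3 = 0 \<or> s mod 3 = 1 \<or> s mod 3 = 2" by linarith
    moreover have "b = 0 \<or> b = 1 \<or> b = 2" using assms(2) by linarith
    ultimately show ?thesis using assms(1) unfolding sum3 by (elim disjE) simp_all
  qed
  finally show ?thesis .
qed

locale tseitin = gyo_obstruction E V M for E :: "'a set set" and V M +
  fixes enc :: "nat \<Rightarrow> 'v" and a :: "'k::comm_monoid_add"
    and c :: "'a set \<Rightarrow> 'a \<Rightarrow> nat" and Y0 :: "'a set"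
  assumes inj_enc: "inj enc" and a_nonzero: "a \<noteq> 0" and pos: "positive_monoid TYPE('k)"
    and Y0: "Y0 \<in> M"
    and c_unit: "\<And>Y v. Y \<in> M \<Longrightarrow> v \<in> Y \<Longrightarrow> c Y v = 1 \<or> c Y v = 2"
    and c_balanced: "\<And>v. v \<in> V \<Longrightarrow> 3 dvd (\<Sum>Y\<in>{Y\<in>M. v \<in> Y}. c Y v)"
begin

lemma finite_M_member: "Y \<in> M \<Longrightarrow> finite Y"
  using M_subset finite_V by (rule finite_subset)

definition weight :: "nat \<Rightarrow> 'k" where
  "weight w = (\<Sum>i<w. a)"

lemma sum_const_weight: "finite T \<Longrightarrow> (\<Sum>x\<in>T. a) = weight (card T)"
  by (induction rule: finite_induct) (simp_all add: weight_def add.commute)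

lemma sum_weight: "finite S \<Longrightarrow> (\<Sum>x\<in>S. weight w) = weight (card S * w)"
proof -
  assume "finite S"
  have "(\<Sum>x\<in>S. weight w) = (\<Sum>(x, i)\<in>S \<times> {..<w}. a)"
    unfolding weight_def by (rule sum.cartesian_product)
  also have "\<dots> = weight (card S * w)"
    using \<open>finite S\<close> sum_const_weight[of "S \<times> {..<w}"] by (simp add: card_cartesian_product split_def)
  finally show ?thesis .
qed

lemma weight_nonzero: "0 < w \<Longrightarrow> weight w \<noteq> 0"
  using a_nonzero positive_sum_eq_0_iff[OF pos, of "{..<w}" "\<lambda>_. a"] by (auto simp: weight_def)

definition ternary :: "'a set \<Rightarrow> ('a \<rightharpoonup> 'v) \<Rightarrow> bool" where
  "ternary A t \<longleftrightarrow> dom t = A \<and> (\<forall>v\<in>A. \<exists>k<3. t v = Some (enc k))"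

definition digit :: "('a \<rightharpoonup> 'v) \<Rightarrow> 'a \<Rightarrow> nat" where
  "digit t v = inv enc (the (t v))"

lemma digit_enc: "t v = Some (enc k) \<Longrightarrow> digit t v = k"
  by (simp add: digit_def inv_f_f[OF inj_enc])

lemma finite_ternary: "finite A \<Longrightarrow> finite {t. ternary A t}"
proof -
  assume "finite A"
  have "ran t \<subseteq> enc ` {..<3}" if t: "ternary A t" for t
  proof
    fix y assume "y \<in> ran t"
    then obtain v where v: "t v = Some y" by (auto simp: ran_def)
    then have "v \<in> A" using t by (auto simp: ternary_def)
    then obtain k where "k < 3" "t v = Some (enc k)" using t by (auto simp: ternary_def)
    then show "y \<in> enc ` {..<3}" using v by auto
  qed
  then have "{t. ternary A t} \<subseteq> {t. dom t = A \<and> ran t \<subseteq> enc ` {..<3}}"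
    by (auto simp: ternary_def)
  moreover have "finite {t. dom t = A \<and> ran t \<subseteq> enc ` {..<3}}"
    using \<open>finite A\<close> by (simp add: finite_set_of_finite_maps)
  ultimately show ?thesis by (rule finite_subset)
qed

lemma ternary_restrict: "ternary B r \<Longrightarrow> A \<subseteq> B \<Longrightarrow> ternary A (r |` A)"
  unfolding ternary_def by auto

lemma ternary_extensions:
  assumes t: "ternary (B - {d}) t" and "d \<in> B"
  shows "{r. ternary B r \<and> r |` (B - {d}) = t} = (\<lambda>k. t(d \<mapsto> enc k)) ` {..<3}"
proof (intro subset_antisym subsetI)
  fix r assume "r \<in> {r. ternary B r \<and> r |` (B - {d}) = t}"
  then have r: "ternary B r" "r |` (B - {d}) = t" by auto
  then obtain k where k: "k < 3" "r d = Some (enc k)" using \<open>d \<in> B\<close> by (auto simp: ternary_def)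
  have "r x = (t(d \<mapsto> enc k)) x" for x
  proof (cases "x = d")
    case False
    have "dom r = B" using r(1) by (simp add: ternary_def)
    then show ?thesis
      using False fun_cong[OF r(2), of x] by (cases "x \<in> B") (auto simp: restrict_map_def)
  qed (use k in simp)
  then show "r \<in> (\<lambda>k. t(d \<mapsto> enc k)) ` {..<3}" using k(1) by blast
next
  fix r assume "r \<in> (\<lambda>k. t(d \<mapsto> enc k)) ` {..<3}"
  then obtain k where "k < 3" "r = t(d \<mapsto> enc k)" by blast
  moreover have "t(d \<mapsto> enc k) |` (B - {d}) = t"
    using t by (auto simp: ternary_def restrict_map_def fun_eq_iff)
  ultimately show "r \<in> {r. ternary B r \<and> r |` (B - {d}) = t}"
    using t \<open>d \<in> B\<close> by (auto simp: ternary_def)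
qed

lemma inj_on_update_enc: "inj_on (\<lambda>k. t(d \<mapsto> enc k)) K"
  by (rule inj_onI) (metis fun_upd_same option.inject inj_enc injD)

definition uniform_rel :: "'a set \<Rightarrow> nat \<Rightarrow> ('a \<rightharpoonup> 'v) \<Rightarrow> 'k" where
  "uniform_rel A w t = (if ternary A t then weight w else 0)"

lemma is_krel_uniform_rel: "finite A \<Longrightarrow> is_krel A (uniform_rel A w)"
  using finite_ternary[of A]
  by (auto simp: is_krel_def uniform_rel_def ternary_def elim: rev_finite_subset)

lemma marginal_uniform_rel_remove:
  assumes "finite B" and "d \<in> B"
  shows "marginal (uniform_rel B w) (B - {d}) = uniform_rel (B - {d}) (3 * w)"
proof
  fix t
  have "marginal (uniform_rel B w) (B - {d}) t = (\<Sum>r\<in>{r. ternary B r \<and> r |` (B - {d}) = t}. weight w)"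
    by (subst marginal_eq_sum_superset[OF finite_ternary[OF assms(1)]])
      (auto simp: uniform_rel_def intro: sum.cong)
  also have "\<dots> = uniform_rel (B - {d}) (3 * w) t"
  proof (cases "ternary (B - {d}) t")
    case True
    then show ?thesis
      by (simp add: ternary_extensions[OF True assms(2)] sum_weight card_image[OF inj_on_update_enc]
          uniform_rel_def)
  next
    case False
    then have no_ext: "{r. ternary B r \<and> r |` (B - {d}) = t} = {}"
      using ternary_restrict[of B _ "B - {d}"] by blast
    show ?thesis using False unfolding no_ext by (simp add: uniform_rel_def)
  qed
  finally show "marginal (uniform_rel B w) (B - {d}) t = uniform_rel (B - {d}) (3 * w) t" .
qed

lemma marginal_uniform_rel:
  "finite B \<Longrightarrow> A \<subseteq> B \<Longrightarrow> marginal (uniform_rel B w) A = uniform_rel A (3 ^ card (B - A) * w)"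
proof (induction "card (B - A)" arbitrary: B w)
  case 0
  then have "B - A = {}" using card_0_eq[OF finite_Diff[OF 0(2)]] by simp
  then have "B = A" using 0(3) by blast
  then show ?case using marginal_full[OF is_krel_uniform_rel[OF 0(2)], of w] by simp
next
  case (Suc n)
  then obtain d where d: "d \<in> B - A" by (metis card.empty ex_in_conv nat.distinct(1))
  have card: "card (B - {d} - A) = n"
    using Suc.hyps(2) d by (simp add: Diff_insert2[symmetric] card_Diff_singleton Suc.prems(1))
  have "marginal (uniform_rel B w) A = marginal (marginal (uniform_rel B w) (B - {d})) A"
    using Suc.prems d by (simp add: marginal_marginal[OF is_krel_uniform_rel] subset_Diff_insert)
  also have "\<dots> = uniform_rel A (3 ^ n * (3 * w))"
    using Suc.hyps(1)[OF card[symmetric]] Suc.prems d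
    by (simp add: marginal_uniform_rel_remove subset_Diff_insert card)
  finally show ?case by (simp add: mult.assoc mult.left_commute flip: Suc.hyps(2))
qed

definition charge :: "'a set \<Rightarrow> nat" where
  "charge Y = (if Y = Y0 then 1 else 0)"

definition satisfies :: "'a set \<Rightarrow> ('a \<rightharpoonup> 'v) \<Rightarrow> bool" where
  "satisfies Y t \<longleftrightarrow> (\<Sum>v\<in>Y. c Y v * digit t v) mod 3 = charge Y"

text \<open>The weights are chosen such that every proper marginal of a constraint relation is
  uniform with a weight depending only on the size of the attribute set.\<close>

definition constraint_rel :: "'a set \<Rightarrow> ('a \<rightharpoonup> 'v) \<Rightarrow> 'k" where
  "constraint_rel Y t = (if ternary Y t \<and> satisfies Y t then weight (3 ^ (card V - card Y)) else 0)"

lemma is_krel_constraint_rel: "Y \<in> M \<Longrightarrow> is_krel Y (constraint_rel Y)"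
  using finite_ternary[OF finite_M_member, of Y]
  by (auto simp: is_krel_def constraint_rel_def ternary_def elim: rev_finite_subset)

lemma satisfies_update:
  assumes "Y \<in> M" and "v0 \<in> Y"
  shows "satisfies Y (t(v0 \<mapsto> enc k)) \<longleftrightarrow>
    (c Y v0 * k + (\<Sum>v\<in>Y - {v0}. c Y v * digit t v)) mod 3 = charge Y"
proof -
  have "(\<Sum>v\<in>Y - {v0}. c Y v * digit (t(v0 \<mapsto> enc k)) v) = (\<Sum>v\<in>Y - {v0}. c Y v * digit t v)"
    by (rule sum.cong) (simp_all add: digit_def)
  then show ?thesis
    unfolding satisfies_def sum.remove[OF finite_M_member[OF assms(1)] assms(2)]
    by (simp add: digit_enc)
qed

lemma marginal_constraint_rel_remove:
  assumes Y: "Y \<in> M" and "v0 \<in> Y"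
  shows "marginal (constraint_rel Y) (Y - {v0}) = uniform_rel (Y - {v0}) (3 ^ (card V - card Y))"
proof
  fix t
  let ?w = "weight (3 ^ (card V - card Y))"
  let ?s = "\<Sum>v\<in>Y - {v0}. c Y v * digit t v"
  have "marginal (constraint_rel Y) (Y - {v0}) t = sum (constraint_rel Y) {r. ternary Y r \<and> r |` (Y - {v0}) = t}"
    by (subst marginal_eq_sum_superset[OF finite_ternary[OF finite_M_member[OF Y]]])
      (auto simp: constraint_rel_def)
  also have "\<dots> = uniform_rel (Y - {v0}) (3 ^ (card V - card Y)) t"
  proof (cases "ternary (Y - {v0}) t")
    case True
    have "sum (constraint_rel Y) {r. ternary Y r \<and> r |` (Y - {v0}) = t} =
        (\<Sum>k<3. constraint_rel Y (t(v0 \<mapsto> enc k)))"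
      unfolding ternary_extensions[OF True \<open>v0 \<in> Y\<close>]
      by (rule sum.reindex[OF inj_on_update_enc, unfolded comp_def])
    also have "\<dots> = (\<Sum>k<3. if (c Y v0 * k + ?s) mod 3 = charge Y then ?w else 0)"
    proof (rule sum.cong[OF refl])
      fix k :: nat assume "k \<in> {..<3}"
      then have "ternary Y (t(v0 \<mapsto> enc k))"
        using ternary_extensions[OF True \<open>v0 \<in> Y\<close>] by blast
      then show "constraint_rel Y (t(v0 \<mapsto> enc k)) = (if (c Y v0 * k + ?s) mod 3 = charge Y then ?w else 0)"
        by (simp add: constraint_rel_def satisfies_update[OF Y \<open>v0 \<in> Y\<close>])
    qed
    also have "\<dots> = ?w"
      using c_unit[OF Y \<open>v0 \<in> Y\<close>] by (intro sum_mod3_residues) (simp_all add: charge_def)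
    finally show ?thesis using True by (simp add: uniform_rel_def)
  next
    case False
    then have no_ext: "{r. ternary Y r \<and> r |` (Y - {v0}) = t} = {}"
      using ternary_restrict[of Y _ "Y - {v0}"] by blast
    show ?thesis using False unfolding no_ext by (simp add: uniform_rel_def)
  qed
  finally show "marginal (constraint_rel Y) (Y - {v0}) t = uniform_rel (Y - {v0}) (3 ^ (card V - card Y)) t" .
qed

lemma marginal_constraint_rel:
  assumes Y: "Y \<in> M" and "A \<subset> Y"
  shows "marginal (constraint_rel Y) A = uniform_rel A (3 ^ (card V - card A - 1))"
proof -
  obtain v0 where v0: "v0 \<in> Y" "v0 \<notin> A" using assms(2) by blast
  have A: "A \<subseteq> Y - {v0}" using assms(2) v0 by blast
  have fin: "finite Y" by (rule finite_M_member[OF Y])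
  have "marginal (constraint_rel Y) A = marginal (marginal (constraint_rel Y) (Y - {v0})) A"
    using marginal_marginal[OF is_krel_constraint_rel[OF Y] A] by simp
  also have "\<dots> = uniform_rel A (3 ^ card (Y - {v0} - A) * 3 ^ (card V - card Y))"
    using fin A by (simp add: marginal_constraint_rel_remove[OF Y v0(1)] marginal_uniform_rel)
  also have "3 ^ card (Y - {v0} - A) * 3 ^ (card V - card Y) = (3::nat) ^ (card V - card A - 1)"
  proof -
    have "card A < card Y" using fin assms(2) by (rule psubset_card_mono)
    moreover have "card Y \<le> card V" using M_subset[OF Y] finite_V by (rule card_mono[rotated])
    moreover have "finite A" using assms(2) fin by (meson finite_subset psubset_imp_subset)
    then have "card (Y - {v0} - A) = card Y - 1 - card A"
      using A v0(1) by (simp add: card_Diff_subset card_Diff_singleton)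
    ultimately show ?thesis by (simp flip: power_add)
  qed
  finally show ?thesis .
qed

definition local_rel :: "'a set \<Rightarrow> ('a \<rightharpoonup> 'v) \<Rightarrow> 'k" where
  "local_rel A = (if A \<in> M then constraint_rel A else uniform_rel A (3 ^ (card V - card A - 1)))"

lemma marginal_constraint_rel_eq_local_rel:
  assumes "Y \<in> M" and "B \<subseteq> Y"
  shows "marginal (constraint_rel Y) B = local_rel B"
proof (cases "B = Y")
  case True
  then show ?thesis using marginal_full[OF is_krel_constraint_rel] assms(1) by (simp add: local_rel_def)
next
  case False
  then have "B \<notin> M" using M_incomparable assms by blast
  then show ?thesis using marginal_constraint_rel[OF assms(1)] assms(2) False by (simp add: local_rel_def)
qed

lemma is_krel_local_rel: "Y \<in> M \<Longrightarrow> B \<subseteq> Y \<Longrightarrow> is_krel B (local_rel B)"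
  using is_krel_marginal[OF is_krel_constraint_rel] by (simp flip: marginal_constraint_rel_eq_local_rel)

lemma marginal_local_rel:
  assumes "Y \<in> M" and "A \<subseteq> B" and "B \<subseteq> Y"
  shows "marginal (local_rel B) A = local_rel A"
proof -
  have "marginal (local_rel B) A = marginal (marginal (constraint_rel Y) B) A"
    using assms(1,3) by (simp add: marginal_constraint_rel_eq_local_rel)
  also have "\<dots> = marginal (constraint_rel Y) A"
    by (rule marginal_marginal[OF is_krel_constraint_rel[OF assms(1)] assms(2)])
  also have "\<dots> = local_rel A"
    using assms by (intro marginal_constraint_rel_eq_local_rel) auto
  finally show ?thesis .
qed

definition padded :: "'a set \<Rightarrow> ('a \<rightharpoonup> 'v) \<Rightarrow> bool" where
  "padded D t \<longleftrightarrow> dom t = D \<and> (\<forall>u\<in>D - V. t u = Some (enc 0))"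

definition pad :: "'a set \<Rightarrow> ('a \<rightharpoonup> 'v) \<Rightarrow> ('a \<rightharpoonup> 'v)" where
  "pad D s = (\<lambda>u. if u \<in> D - V then Some (enc 0) else s u)"

definition pad_rel :: "'a set \<Rightarrow> (('a \<rightharpoonup> 'v) \<Rightarrow> 'k) \<Rightarrow> ('a \<rightharpoonup> 'v) \<Rightarrow> 'k" where
  "pad_rel D Q t = (if padded D t then Q (t |` V) else 0)"

lemma
  assumes "dom s = D \<inter> V"
  shows padded_pad: "padded D (pad D s)" and pad_restrict_V: "pad D s |` V = s"
proof -
  have "s u \<noteq> None \<longleftrightarrow> u \<in> D \<inter> V" for u using assms by (metis domIff)
  then have "dom (pad D s) = D" by (auto simp: pad_def dom_def)
  then show "padded D (pad D s)" by (simp add: padded_def pad_def)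
  show "pad D s |` V = s"
  proof
    fix u show "(pad D s |` V) u = s u"
      using assms by (cases "u \<in> V") (auto simp: pad_def)
  qed
qed

lemma pad_restrict:
  assumes "padded D r"
  shows "pad D (r |` V) = r"
proof
  fix u
  have "r u = None" if "u \<notin> D" using assms that unfolding padded_def by (metis domIff)
  then show "pad D (r |` V) u = r u"
    using assms by (cases "u \<in> V") (auto simp: padded_def pad_def)
qed

lemma padded_restrict: "padded D r \<Longrightarrow> D' \<subseteq> D \<Longrightarrow> padded D' (r |` D')"
  unfolding padded_def by auto

lemma is_krel_pad_rel:
  assumes "is_krel (D \<inter> V) Q"
  shows "is_krel D (pad_rel D Q)"
proof -
  have "{t. pad_rel D Q t \<noteq> 0} \<subseteq> pad D ` {s. Q s \<noteq> 0}"
  proof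
    fix t assume "t \<in> {t. pad_rel D Q t \<noteq> 0}"
    then have "padded D t" "Q (t |` V) \<noteq> 0" by (auto simp: pad_rel_def split: if_splits)
    then show "t \<in> pad D ` {s. Q s \<noteq> 0}"
      by (intro image_eqI[where x = "t |` V"]) (simp_all add: pad_restrict)
  qed
  then have "finite {t. pad_rel D Q t \<noteq> 0}"
    using is_krelD(1)[OF assms] by (rule finite_surj[rotated])
  then show ?thesis by (auto simp: is_krel_def pad_rel_def padded_def split: if_splits)
qed

lemma marginal_pad_rel:
  assumes Q: "is_krel (D \<inter> V) Q" and "D' \<subseteq> D"
  shows "marginal (pad_rel D Q) D' = pad_rel D' (marginal Q (D' \<inter> V))"
proof
  fix t
  let ?L = "{r. pad_rel D Q r \<noteq> 0 \<and> r |` D' = t}"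
  let ?R = "{s. Q s \<noteq> 0 \<and> s |` (D' \<inter> V) = t |` V}"
  have L: "padded D r" "Q (r |` V) \<noteq> 0" if "r \<in> ?L" for r
    using that by (auto simp: pad_rel_def split: if_splits)
  show "marginal (pad_rel D Q) D' t = pad_rel D' (marginal Q (D' \<inter> V)) t"
  proof (cases "padded D' t")
    case False
    have no_ext: "?L = {}" using padded_restrict[OF L(1) assms(2)] False by blast
    show ?thesis using False unfolding marginal_def no_ext by (simp add: pad_rel_def)
  next
    case True
    have "sum (pad_rel D Q) ?L = sum Q ?R"
    proof (rule sum.reindex_bij_witness[where j = "\<lambda>r. r |` V" and i = "pad D"])
      fix r assume r: "r \<in> ?L"
      show "pad D (r |` V) = r" by (rule pad_restrict[OF L(1)[OF r]])
      show "Q (r |` V) = pad_rel D Q r" using L(1)[OF r] by (simp add: pad_rel_def)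
      have "V \<inter> (D' \<inter> V) = D' \<inter> V" by blast
      moreover have "r |` D' = t" using r by simp
      ultimately have "r |` V |` (D' \<inter> V) = t |` V" by (auto simp: Int_commute)
      then show "r |` V \<in> ?R" using L(2)[OF r] by simp
    next
      fix s assume s: "s \<in> ?R"
      then have ds: "dom s = D \<inter> V" using is_krelD(2)[OF Q] by simp
      show "pad D s |` V = s" by (rule pad_restrict_V[OF ds])
      have "pad D s |` D' = t"
      proof
        fix u
        have "(s |` (D' \<inter> V)) u = (t |` V) u" using s by simp
        then show "(pad D s |` D') u = t u"
          using True assms(2) by (cases "u \<in> D'"; cases "u \<in> V") (auto simp: padded_def pad_def)
      qed
      then show "pad D s \<in> ?L"
        using s padded_pad[OF ds] pad_restrict_V[OF ds] by (simp add: pad_rel_def)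
    qed
    then show ?thesis using True by (simp add: marginal_def pad_rel_def)
  qed
qed

definition tseitin_rel :: "'a set \<Rightarrow> ('a \<rightharpoonup> 'v) \<Rightarrow> 'k" where
  "tseitin_rel X = pad_rel X (local_rel (X \<inter> V))"

lemma is_krel_tseitin_rel: "X \<in> E \<Longrightarrow> is_krel X (tseitin_rel X)"
  unfolding tseitin_rel_def using E_covered is_krel_local_rel is_krel_pad_rel by blast

lemma marginal_tseitin_rel:
  assumes "X \<in> E" and "D \<subseteq> X"
  shows "marginal (tseitin_rel X) D = pad_rel D (local_rel (D \<inter> V))"
proof -
  obtain Y where Y: "Y \<in> M" "X \<inter> V \<subseteq> Y" using E_covered[OF assms(1)] by blast
  have "marginal (tseitin_rel X) D = pad_rel D (marginal (local_rel (X \<inter> V)) (D \<inter> V))"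
    unfolding tseitin_rel_def by (rule marginal_pad_rel[OF is_krel_local_rel[OF Y] assms(2)])
  also have "marginal (local_rel (X \<inter> V)) (D \<inter> V) = local_rel (D \<inter> V)"
    using Y assms(2) by (intro marginal_local_rel[OF Y(1)]) auto
  finally show ?thesis .
qed

lemma pairwise_consistent_tseitin_rel:
  assumes tp: "transportation_property TYPE('k)"
  shows "pairwise_consistent E tseitin_rel"
  unfolding pairwise_consistent_def
proof (intro ballI)
  fix X X' assume "X \<in> E" "X' \<in> E"
  have "marginal (tseitin_rel X) (X \<inter> X') = marginal (tseitin_rel X') (X \<inter> X')"
    using marginal_tseitin_rel[OF \<open>X \<in> E\<close>] marginal_tseitin_rel[OF \<open>X' \<in> E\<close>] by simp
  then show "\<exists>W. is_krel (X \<union> X') W \<and> marginal W X = tseitin_rel X \<and> marginal W X' = tseitin_rel X'"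
    by (intro ex_krel_join[OF pos tp] is_krel_tseitin_rel \<open>X \<in> E\<close> \<open>X' \<in> E\<close>)
qed

lemma satisfies_restrict: "satisfies Y (r |` Y) \<longleftrightarrow> satisfies Y r"
  unfolding satisfies_def digit_def by (simp cong: sum.cong)

text \<open>Summing all constraints counts every vertex with total coefficient divisible by 3,
  while the charges add up to 1.\<close>

lemma tseitin_unsatisfiable: "\<not> (\<forall>Y\<in>M. satisfies Y r)"
proof
  assume sat: "\<forall>Y\<in>M. satisfies Y r"
  let ?g = "\<lambda>Y v. c Y v * digit r v"
  have "(\<Sum>Y\<in>M. \<Sum>v\<in>Y. ?g Y v) mod 3 = (\<Sum>Y\<in>M. (\<Sum>v\<in>Y. ?g Y v) mod 3) mod 3"
    by (simp add: mod_sum_eq)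
  also have "\<dots> = (\<Sum>Y\<in>M. charge Y) mod 3"
    using sat by (simp add: satisfies_def)
  also have "\<dots> = 1" using finite_M Y0 by (simp add: charge_def)
  finally have one: "(\<Sum>Y\<in>M. \<Sum>v\<in>Y. ?g Y v) mod 3 = 1" .
  have "(\<Sum>Y\<in>M. \<Sum>v\<in>Y. ?g Y v) = (\<Sum>Y\<in>M. \<Sum>v\<in>{v\<in>V. v \<in> Y}. ?g Y v)"
  proof (rule sum.cong[OF refl])
    fix Y assume "Y \<in> M"
    then have "{v\<in>V. v \<in> Y} = Y" using M_subset by blast
    then show "(\<Sum>v\<in>Y. ?g Y v) = (\<Sum>v\<in>{v\<in>V. v \<in> Y}. ?g Y v)" by simp
  qed
  also have "\<dots> = (\<Sum>v\<in>V. \<Sum>Y\<in>{Y\<in>M. v \<in> Y}. ?g Y v)"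
    by (rule sum.swap_restrict[OF finite_M finite_V])
  also have "\<dots> = (\<Sum>v\<in>V. digit r v * (\<Sum>Y\<in>{Y\<in>M. v \<in> Y}. c Y v))"
    by (simp add: sum_distrib_left mult.commute)
  finally have "3 dvd (\<Sum>Y\<in>M. \<Sum>v\<in>Y. ?g Y v)"
    using c_balanced by (simp add: dvd_sum)
  with one show False by simp
qed

lemma not_globally_consistent_tseitin_rel: "\<not> globally_consistent E tseitin_rel"
proof
  assume "globally_consistent E tseitin_rel"
  then obtain W where W: "is_krel (\<Union>E) W" "\<And>X. X \<in> E \<Longrightarrow> marginal W X = tseitin_rel X"
    unfolding globally_consistent_def by blast
  obtain X0 where X0: "X0 \<in> E" using M_traces[OF Y0] by blast
  have "marginal W {} = marginal (marginal W X0) {}"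
    using marginal_marginal[OF W(1), of "{}" X0] by simp
  also have "\<dots> = pad_rel {} (local_rel {})"
    using W(2)[OF X0] marginal_tseitin_rel[OF X0, of "{}"] by simp
  finally have "marginal W {} Map.empty = local_rel {} Map.empty"
    by (simp add: pad_rel_def padded_def)
  also have "\<dots> = weight (3 ^ (card V - 1))"
    using M_members_nonempty by (auto simp: local_rel_def uniform_rel_def ternary_def)
  also have "\<dots> \<noteq> 0" by (simp add: weight_nonzero)
  finally obtain r where r: "W r \<noteq> 0" by (rule marginal_nonzeroD)
  have "satisfies Y r" if Y: "Y \<in> M" for Y
  proof -
    obtain X where X: "X \<in> E" "X \<inter> V = Y" using M_traces[OF Y] by blast
    have "tseitin_rel X (r |` X) \<noteq> 0"
      using marginal_at_restrict_nonzero[OF pos W(1) r] W(2)[OF X(1)] by metis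
    then have "constraint_rel Y (r |` Y) \<noteq> 0"
      using Y X(2) by (auto simp: tseitin_rel_def pad_rel_def local_rel_def split: if_splits)
    then show ?thesis by (simp add: constraint_rel_def satisfies_restrict split: if_splits)
  qed
  with tseitin_unsatisfiable show False by blast
qed

lemma not_local_to_global:
  assumes "transportation_property TYPE('k)"
  shows "\<not> local_to_global TYPE('k) TYPE('v) E"
  unfolding local_to_global_def
  using is_krel_tseitin_rel pairwise_consistent_tseitin_rel[OF assms]
    not_globally_consistent_tseitin_rel by blast

end

lemma ex_mod3_unit_coefficients:
  assumes "finite S" and "y1 \<in> S" and "y2 \<in> S" and "y1 \<noteq> y2"
  shows "\<exists>f. (\<forall>x\<in>S. f x = 1 \<or> f x = (2::nat)) \<and> 3 dvd (\<Sum>x\<in>S. f x)"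
proof -
  define m where "m = card (S - {y1} - {y2})"
  define p where "p = (if m mod 3 = 2 then 2 else 1 :: nat)"
  define q where "q = (if m mod 3 = 1 then 1 else 2 :: nat)"
  define f where "f x = (if x = y1 then p else if x = y2 then q else 1)" for x
  have "(\<Sum>x\<in>S. f x) = f y1 + (\<Sum>x\<in>S - {y1}. f x)" by (rule sum.remove[OF assms(1,2)])
  also have "(\<Sum>x\<in>S - {y1}. f x) = f y2 + (\<Sum>x\<in>S - {y1} - {y2}. f x)"
    by (rule sum.remove) (use assms in auto)
  also have "(\<Sum>x\<in>S - {y1} - {y2}. f x) = m" by (simp add: f_def m_def)
  finally have "(\<Sum>x\<in>S. f x) = p + q + m" using assms(4) by (simp add: f_def)
  moreover have "3 dvd (p + q + m)" unfolding p_def q_def by presburger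
  moreover have "\<forall>x\<in>S. f x = 1 \<or> f x = 2" by (simp add: f_def p_def q_def)
  ultimately show ?thesis by metis
qed

lemma not_local_to_global_if_gyo_obstruction:
  assumes obs: "gyo_obstruction E V M"
    and nontrivial: "nontrivial_monoid TYPE('k::comm_monoid_add)"
    and pos: "positive_monoid TYPE('k)" and tp: "transportation_property TYPE('k)"
    and inf: "infinite (UNIV :: 'v set)"
  shows "\<not> local_to_global TYPE('k) TYPE('v) E"
proof -
  interpret gyo_obstruction E V M by (fact obs)
  obtain enc :: "nat \<Rightarrow> 'v" where enc: "inj enc" using infinite_countable_subset[OF inf] by blast
  obtain a :: 'k where a: "a \<noteq> 0"
    using nontrivial unfolding nontrivial_monoid_def by (metis (full_types))
  obtain Y0 where Y0: "Y0 \<in> M" using M_nonempty by blast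
  have "\<forall>v\<in>V. \<exists>f. (\<forall>Y\<in>{Y\<in>M. v \<in> Y}. f Y = 1 \<or> f Y = (2::nat)) \<and>
      3 dvd (\<Sum>Y\<in>{Y\<in>M. v \<in> Y}. f Y)"
  proof
    fix v assume "v \<in> V"
    then obtain Y1 Y2 where "Y1 \<in> M" "Y2 \<in> M" "Y1 \<noteq> Y2" "v \<in> Y1" "v \<in> Y2"
      using V_shared by blast
    then show "\<exists>f. (\<forall>Y\<in>{Y\<in>M. v \<in> Y}. f Y = 1 \<or> f Y = (2::nat)) \<and>
        3 dvd (\<Sum>Y\<in>{Y\<in>M. v \<in> Y}. f Y)"
      using finite_M by (intro ex_mod3_unit_coefficients[of _ Y1 Y2]) auto
  qed
  from bchoice[OF this] obtain F :: "'a \<Rightarrow> 'a set \<Rightarrow> nat"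
    where F: "\<forall>v\<in>V. (\<forall>Y\<in>{Y\<in>M. v \<in> Y}. F v Y = 1 \<or> F v Y = 2) \<and>
      3 dvd (\<Sum>Y\<in>{Y\<in>M. v \<in> Y}. F v Y)" ..
  interpret tseitin E V M enc a "\<lambda>Y v. F v Y" Y0
  proof
    show "F v Y = 1 \<or> F v Y = 2" if "Y \<in> M" "v \<in> Y" for Y v
      using F M_subset that by blast
  qed (use F enc a pos Y0 in auto)
  show ?thesis by (rule not_local_to_global[OF tp])
qed

theorem corollary18:
  fixes E :: "'a set set"
  assumes "nontrivial_monoid TYPE('k::comm_monoid_add)"
    and "positive_monoid TYPE('k)"
    and "transportation_property TYPE('k)"
    and "infinite (UNIV :: 'v set)"
    and "hypergraph E"
  shows "acyclic_hypergraph E \<longleftrightarrow> local_to_global TYPE('k) TYPE('v) E"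
proof
  assume "acyclic_hypergraph E"
  then obtain T where "join_tree E T" by (auto simp: acyclic_hypergraph_def)
  moreover have "finite E" using assms(5) by (simp add: hypergraph_def)
  ultimately show "local_to_global TYPE('k) TYPE('v) E"
    unfolding local_to_global_def using join_tree_globally_consistent[OF assms(2,3)] by blast
next
  assume "local_to_global TYPE('k) TYPE('v) E"
  then show "acyclic_hypergraph E"
    using not_acyclic_gyo_obstruction[OF assms(5)] not_local_to_global_if_gyo_obstruction assms(1-4)
    by blast
qed

end
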